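(* Let $\mathcal{H}$ be a $d$-dimensional Hilbert space and $\mathcal{H}_{\mathrm{anc}}$ the Hilbert space of an ancillary system with $\dim\mathcal{H}_{\mathrm{anc}}\ge 2$. Suppose the classical pure states $\{|\chi_i\rangle\}_{i=1}^d\subset\mathcal{H}$ form a linearly independent set spanning $\mathcal{H}$. Then there exists an isometry $\Lambda:\mathcal{H}\to\mathcal{H}\otimes\mathcal{H}_{\mathrm{anc}}^{\otimes d}$ such that for every density operator $\rho$ on $\mathcal{H}$ with nonclassical number $\mathrm{NN}(\rho)=k$, regarding $\Lambda\rho\Lambda^\dagger$ as a state of the $d+1$ parties $\mathcal{H},\mathcal{H}_{\mathrm{anc}},\dots,\mathcal{H}_{\mathrm{anc}}$: (a) if $2\le k\le d$ (i.e. $\rho$ is nonclassical), then $\Lambda\rho\Lambda^\dagger$ is genuinely $(k+1)$-partite entangled, i.e. $\mathrm{ed}(\Lambda\rho\Lambda^\dagger)=k+1$; (b) $\Lambda\rho\Lambda^\dagger$ is fully separable ($\mathrm{ed}=1$) if and only if $k=1$ (i.e. $\rho$ is classical).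
   Context: Given a finite set of "classical" pure states $\{|\chi_i\rangle\}$ spanning $\mathcal{H}$, the nonclassical rank of a pure state is $\mathrm{NR}(|\psi\rangle)=\min\{r : |\psi\rangle=\sum_{i=1}^r c_i|\chi_i\rangle,\ c_i\neq0\}$, and the nonclassical number of a mixed state is $\mathrm{NN}(\rho)=\min_{\{p_i,|\psi_i\rangle\}}\max_i\mathrm{NR}(|\psi_i\rangle)$ over all pure-state decompositions $\rho=\sum_ip_i|\psi_i\rangle\langle\psi_i|$; $\rho$ is classical iff $\mathrm{NN}(\rho)=1$. For a multipartite system, a pure state is $k$-producible if it is a tensor product $|\psi_1\rangle\otimes\cdots\otimes|\psi_m\rangle$ where each factor pertains to at most $k$ parties; a mixed state is $k$-producible if it is a convex combination of $k$-producible pure states. A state is genuinely $k$-partite entangled, or has entanglement depth $\mathrm{ed}(\rho)=k$, if it is $k$-producible but not $(k-1)$-producible; $\mathrm{ed}(\rho)=1$ means fully separable. *)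

theory Defs
  imports Complex_Main "HOL-Library.FuncSet" "HOL-Library.Disjoint_Sets"
begin

(* Finite-dimensional Hilbert spaces are represented concretely: a vector is a function
   'i => complex, considered on a finite carrier X of basis indices; an operator is a
   kernel (matrix) 'i => 'i => complex on X x X. *)

definition inner_on :: "'i set \<Rightarrow> ('i \<Rightarrow> complex) \<Rightarrow> ('i \<Rightarrow> complex) \<Rightarrow> complex" where
  "inner_on X u v = (\<Sum>x\<in>X. cnj (u x) * v x)"

definition unit_vec :: "'i set \<Rightarrow> ('i \<Rightarrow> complex) \<Rightarrow> bool" where
  "unit_vec X v \<longleftrightarrow> inner_on X v v = 1"

definition density_op :: "'i set \<Rightarrow> ('i \<Rightarrow> 'i \<Rightarrow> complex) \<Rightarrow> bool" where
  "density_op X \<rho> \<longleftrightarrow>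
     (\<forall>x\<in>X. \<forall>y\<in>X. \<rho> y x = cnj (\<rho> x y)) \<and>
     (\<forall>v. 0 \<le> Re (\<Sum>x\<in>X. \<Sum>y\<in>X. cnj (v x) * \<rho> x y * v y)) \<and>
     (\<Sum>x\<in>X. \<rho> x x) = 1"

definition pure_decomp :: "'i set \<Rightarrow> ('i \<Rightarrow> 'i \<Rightarrow> complex) \<Rightarrow> nat set \<Rightarrow> (nat \<Rightarrow> real)
     \<Rightarrow> (nat \<Rightarrow> 'i \<Rightarrow> complex) \<Rightarrow> bool" where
  "pure_decomp X \<rho> I p \<psi> \<longleftrightarrow>
     finite I \<and> (\<forall>i\<in>I. 0 < p i) \<and> sum p I = 1 \<and> (\<forall>i\<in>I. unit_vec X (\<psi> i)) \<and>
     (\<forall>x\<in>X. \<forall>y\<in>X. \<rho> x y = (\<Sum>i\<in>I. complex_of_real (p i) * \<psi> i x * cnj (\<psi> i y)))"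

definition nonclassical_rank :: "'i set \<Rightarrow> 'c set \<Rightarrow> ('c \<Rightarrow> 'i \<Rightarrow> complex)
     \<Rightarrow> ('i \<Rightarrow> complex) \<Rightarrow> nat" where
  "nonclassical_rank X C \<chi> \<psi> =
     (LEAST r. \<exists>S. S \<subseteq> C \<and> card S = r \<and>
        (\<exists>c. (\<forall>s\<in>S. c s \<noteq> 0) \<and> (\<forall>x\<in>X. \<psi> x = (\<Sum>s\<in>S. c s * \<chi> s x))))"

definition nonclassical_number :: "'i set \<Rightarrow> 'c set \<Rightarrow> ('c \<Rightarrow> 'i \<Rightarrow> complex)
     \<Rightarrow> ('i \<Rightarrow> 'i \<Rightarrow> complex) \<Rightarrow> nat" where
  "nonclassical_number X C \<chi> \<rho> =
     (LEAST k. \<exists>I p \<psi>. pure_decomp X \<rho> I p \<psi> \<and>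
        (\<forall>i\<in>I. nonclassical_rank X C \<chi> (\<psi> i) \<le> k))"

definition lin_indep_on :: "'i set \<Rightarrow> 'c set \<Rightarrow> ('c \<Rightarrow> 'i \<Rightarrow> complex) \<Rightarrow> bool" where
  "lin_indep_on X C \<chi> \<longleftrightarrow>
     (\<forall>c. (\<forall>x\<in>X. (\<Sum>s\<in>C. c s * \<chi> s x) = 0) \<longrightarrow> (\<forall>s\<in>C. c s = 0))"

definition spans_on :: "'i set \<Rightarrow> 'c set \<Rightarrow> ('c \<Rightarrow> 'i \<Rightarrow> complex) \<Rightarrow> bool" where
  "spans_on X C \<chi> \<longleftrightarrow> (\<forall>v. \<exists>c. \<forall>x\<in>X. v x = (\<Sum>s\<in>C. c s * \<chi> s x))"

definition isometry_on :: "'i set \<Rightarrow> 'j set \<Rightarrow> ('j \<Rightarrow> 'i \<Rightarrow> complex) \<Rightarrow> bool" where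
  "isometry_on X Y L \<longleftrightarrow>
     (\<forall>a\<in>X. \<forall>b\<in>X. (\<Sum>y\<in>Y. cnj (L y a) * L y b) = (if a = b then 1 else 0))"

definition conj_op :: "'i set \<Rightarrow> ('j \<Rightarrow> 'i \<Rightarrow> complex) \<Rightarrow> ('i \<Rightarrow> 'i \<Rightarrow> complex)
     \<Rightarrow> ('j \<Rightarrow> 'j \<Rightarrow> complex)" where
  "conj_op X L \<rho> = (\<lambda>f g. \<Sum>a\<in>X. \<Sum>b\<in>X. L f a * \<rho> a b * cnj (L g b))"

text \<open>Multipartite system with parties 0..<n, party j of local dimension dims j.
  Basis indices are tuples f with f j < dims j.\<close>
definition mp_idx :: "nat \<Rightarrow> (nat \<Rightarrow> nat) \<Rightarrow> (nat \<Rightarrow> nat) set" where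
  "mp_idx n dims = (\<Pi>\<^sub>E j\<in>{..<n}. {..<dims j})"

definition producible_pure :: "nat \<Rightarrow> (nat \<Rightarrow> nat) \<Rightarrow> nat \<Rightarrow> ((nat \<Rightarrow> nat) \<Rightarrow> complex) \<Rightarrow> bool" where
  "producible_pure n dims k \<psi> \<longleftrightarrow>
     (\<exists>P \<phi>. partition_on {..<n} P \<and> (\<forall>B\<in>P. card B \<le> k) \<and>
        (\<forall>f\<in>mp_idx n dims. \<psi> f = (\<Prod>B\<in>P. \<phi> B (restrict f B))))"

definition producible :: "nat \<Rightarrow> (nat \<Rightarrow> nat) \<Rightarrow> nat \<Rightarrow> ((nat \<Rightarrow> nat) \<Rightarrow> (nat \<Rightarrow> nat) \<Rightarrow> complex) \<Rightarrow> bool" where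
  "producible n dims k \<rho> \<longleftrightarrow>
     (\<exists>I p \<psi>. pure_decomp (mp_idx n dims) \<rho> I p \<psi> \<and> (\<forall>i\<in>I. producible_pure n dims k (\<psi> i)))"

definition ent_depth :: "nat \<Rightarrow> (nat \<Rightarrow> nat) \<Rightarrow> ((nat \<Rightarrow> nat) \<Rightarrow> (nat \<Rightarrow> nat) \<Rightarrow> complex) \<Rightarrow> nat" where
  "ent_depth n dims \<rho> = (LEAST k. producible n dims k \<rho>)"

text \<open>Local dimensions of H (party 0, dim d) tensor d ancillas (parties 1..d, dim m).\<close>
definition sys_anc_dims :: "nat \<Rightarrow> nat \<Rightarrow> nat \<Rightarrow> nat" where
  "sys_anc_dims d m j = (if j = 0 then d else m)"

end

theory Submission
  imports Defs
begin

text \<open>Expand the pure states of \<rho> in the classical basis \<chi>. The isometry sends \<chi> i to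
  a i (x) |0..0 \<alpha> 0..0>, with the ancilla state \<alpha> = t|0> + s|1> in position i + 1. The vectors a i have
  Gram matrix (G - eps I)/(1 - eps), G the Gram matrix of \<chi>; for small eps this is still
  positive definite because the \<chi> i are independent, and t^2 = 1 - eps restores G, so the map is
  isometric. A pure state with r nonzero classical coordinates is mapped to a product of a state of
  the system and those r ancillas with |0> on the remaining ancillas, hence it is (r + 1)-producible,
  or 1-producible if r = 1. Conversely, if the system and one of these ancillas lie in different
  blocks of a product, the amplitude is a rank-one function of their two indices, which forces the
  combination of the a i to be parallel to a single a i, i.e. r = 1. Finally, every pure state of a
  decomposition of the image of \<rho> lies in the range of the isometry, so the bounds for pure
  states carry over to nonclassical number and entanglement depth.\<close>

lemma (in comm_monoid_set) eq_single_point: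
  assumes "finite A" "a \<in> A" "\<And>x. x \<in> A \<Longrightarrow> x \<noteq> a \<Longrightarrow> g x = \<^bold>1"
  shows "F g A = g a"
  using assms by (simp add: mono_neutral_right[of A "{a}"])

lemma (in comm_monoid_set) eq_two_points:
  assumes "finite A" "a \<in> A" "b \<in> A" "a \<noteq> b" "\<And>x. x \<in> A \<Longrightarrow> x \<noteq> a \<Longrightarrow> x \<noteq> b \<Longrightarrow> g x = \<^bold>1"
  shows "F g A = g a \<^bold>* g b"
  using assms by (simp add: mono_neutral_right[of A "{a, b}"])

lemma sum_sandwich:
  fixes L R :: "'a \<Rightarrow> 'r::comm_semiring_0" and F G :: "'k \<Rightarrow> 'a \<Rightarrow> 'r"
  shows "(\<Sum>a\<in>A. \<Sum>b\<in>B. L a * (\<Sum>k\<in>I. F k a * G k b) * R b) =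
         (\<Sum>k\<in>I. (\<Sum>a\<in>A. L a * F k a) * (\<Sum>b\<in>B. G k b * R b))"
proof -
  have "(\<Sum>a\<in>A. \<Sum>b\<in>B. L a * (\<Sum>k\<in>I. F k a * G k b) * R b) =
        (\<Sum>a\<in>A. \<Sum>b\<in>B. \<Sum>k\<in>I. (L a * F k a) * (G k b * R b))"
    by (simp add: sum_distrib_left sum_distrib_right mult_ac)
  also have "\<dots> = (\<Sum>k\<in>I. \<Sum>a\<in>A. \<Sum>b\<in>B. (L a * F k a) * (G k b * R b))"
    by (subst sum.swap, rule sum.cong[OF refl], rule sum.swap)
  also have "\<dots> = (\<Sum>k\<in>I. (\<Sum>a\<in>A. L a * F k a) * (\<Sum>b\<in>B. G k b * R b))"
    by (simp add: sum_product)
  finally show ?thesis .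
qed

lemma double_sum_sandwich:
  fixes L R :: "'a \<Rightarrow> 'r::comm_semiring_0" and P Q :: "'a \<Rightarrow> 'c \<Rightarrow> 'r" and K :: "'c \<Rightarrow> 'c \<Rightarrow> 'r"
  shows "(\<Sum>f\<in>A. \<Sum>g\<in>B. L f * (\<Sum>a\<in>C. \<Sum>b\<in>D. P f a * K a b * Q g b) * R g) =
         (\<Sum>a\<in>C. \<Sum>b\<in>D. (\<Sum>f\<in>A. L f * P f a) * K a b * (\<Sum>g\<in>B. Q g b * R g))"
proof -
  have "(\<Sum>f\<in>A. \<Sum>g\<in>B. L f * (\<Sum>a\<in>C. \<Sum>b\<in>D. P f a * K a b * Q g b) * R g) =
        (\<Sum>f\<in>A. \<Sum>g\<in>B. \<Sum>a\<in>C. \<Sum>b\<in>D. (L f * P f a) * K a b * (Q g b * R g))"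
    by (simp add: sum_distrib_left sum_distrib_right mult_ac)
  also have "\<dots> = (\<Sum>f\<in>A. \<Sum>a\<in>C. \<Sum>g\<in>B. \<Sum>b\<in>D. (L f * P f a) * K a b * (Q g b * R g))"
    by (rule sum.cong[OF refl], rule sum.swap)
  also have "\<dots> = (\<Sum>f\<in>A. \<Sum>a\<in>C. \<Sum>b\<in>D. \<Sum>g\<in>B. (L f * P f a) * K a b * (Q g b * R g))"
    by (rule sum.cong[OF refl], rule sum.cong[OF refl], rule sum.swap)
  also have "\<dots> = (\<Sum>a\<in>C. \<Sum>b\<in>D. \<Sum>f\<in>A. \<Sum>g\<in>B. (L f * P f a) * K a b * (Q g b * R g))"
    by (subst sum.swap) (rule sum.cong[OF refl], rule sum.swap)
  also have "\<dots> = (\<Sum>a\<in>C. \<Sum>b\<in>D. (\<Sum>f\<in>A. L f * P f a) * K a b * (\<Sum>g\<in>B. Q g b * R g))"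
    by (simp add: sum_distrib_left sum_distrib_right mult_ac)
  finally show ?thesis .
qed

lemma gram_quadratic_form:
  fixes c e :: "nat \<Rightarrow> complex" and b :: "nat \<Rightarrow> 'a \<Rightarrow> complex"
  shows "(\<Sum>k\<in>K. cnj (\<Sum>i<n. c i * b i k) * (\<Sum>j<n. e j * b j k)) =
         (\<Sum>i<n. \<Sum>j<n. cnj (c i) * (\<Sum>k\<in>K. cnj (b i k) * b j k) * e j)"
proof -
  have "(\<Sum>i<n. \<Sum>j<n. cnj (c i) * (\<Sum>k\<in>K. cnj (b i k) * b j k) * e j) =
        (\<Sum>k\<in>K. (\<Sum>i<n. cnj (c i) * cnj (b i k)) * (\<Sum>j<n. b j k * e j))"
    by (rule sum_sandwich)
  thus ?thesis by (simp add: mult.commute)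
qed

section \<open>Positive semidefinite matrices\<close>

definition psd :: "nat \<Rightarrow> (nat \<Rightarrow> nat \<Rightarrow> complex) \<Rightarrow> bool" where
  "psd n H \<longleftrightarrow> (\<forall>x<n. \<forall>y<n. H y x = cnj (H x y)) \<and>
     (\<forall>v. 0 \<le> Re (\<Sum>x<n. \<Sum>y<n. cnj (v x) * H x y * v y))"

lemma psd_hermitian: "psd n H \<Longrightarrow> x < n \<Longrightarrow> y < n \<Longrightarrow> H y x = cnj (H x y)"
  unfolding psd_def by blast

lemma psd_nonneg: "psd n H \<Longrightarrow> 0 \<le> Re (\<Sum>x<n. \<Sum>y<n. cnj (v x) * H x y * v y)"
  unfolding psd_def by blast

lemma quadratic_form_two_points:
  fixes H :: "nat \<Rightarrow> nat \<Rightarrow> complex" and \<beta> \<gamma> :: complex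
  assumes "y < N" "n < N" "y \<noteq> n"
  defines "v \<equiv> (\<lambda>x. if x = n then \<beta> else if x = y then \<gamma> else 0)"
  shows "(\<Sum>x<N. \<Sum>z<N. cnj (v x) * H x z * v z) =
     cnj \<gamma> * H y y * \<gamma> + cnj \<gamma> * H y n * \<beta> + cnj \<beta> * H n y * \<gamma> + cnj \<beta> * H n n * \<beta>"
proof -
  have vn: "v n = \<beta>" and vy: "v y = \<gamma>" using assms(3) by (simp_all add: v_def)
  have v0: "\<And>z. z \<noteq> y \<Longrightarrow> z \<noteq> n \<Longrightarrow> v z = 0" by (simp add: v_def)
  have inner: "(\<Sum>z<N. cnj (v x) * H x z * v z) = cnj (v x) * H x y * \<gamma> + cnj (v x) * H x n * \<beta>" for x
  proof -
    have "(\<Sum>z<N. cnj (v x) * H x z * v z) = cnj (v x) * H x y * v y + cnj (v x) * H x n * v n"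
      by (rule sum.eq_two_points) (use assms(1-3) v0 in auto)
    thus ?thesis by (simp only: vn vy)
  qed
  have "(\<Sum>x<N. cnj (v x) * H x y * \<gamma> + cnj (v x) * H x n * \<beta>) =
     (cnj (v y) * H y y * \<gamma> + cnj (v y) * H y n * \<beta>) + (cnj (v n) * H n y * \<gamma> + cnj (v n) * H n n * \<beta>)"
    by (rule sum.eq_two_points) (use assms(1-3) v0 in auto)
  thus ?thesis by (simp only: inner vn vy add.assoc)
qed

lemma psd_diag_real:
  assumes "psd N H" "y < N"
  shows "Im (H y y) = 0"
proof -
  have "H y y = cnj (H y y)" using psd_hermitian[OF assms(1,2,2)] .
  hence "Im (H y y) = Im (cnj (H y y))" by (rule arg_cong)
  thus ?thesis by simp
qed

lemma psd_diag_nonneg: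
  assumes "psd N H" "y < N"
  shows "0 \<le> Re (H y y)"
proof -
  define v where "v = (\<lambda>x. if x = y then (1::complex) else 0)"
  have "(\<Sum>x<N. \<Sum>z<N. cnj (v x) * H x z * v z) = (\<Sum>z<N. cnj (v y) * H y z * v z)"
    by (rule sum.eq_single_point[of _ y]) (use assms(2) in \<open>auto simp: v_def\<close>)
  also have "\<dots> = H y y"
    by (subst sum.eq_single_point[of _ y]) (use assms(2) in \<open>auto simp: v_def\<close>)
  finally have "(\<Sum>x<N. \<Sum>z<N. cnj (v x) * H x z * v z) = H y y" .
  thus ?thesis using psd_nonneg[OF assms(1), of v] by simp
qed

lemma psd_zero_diag_row:
  assumes "psd N H" "n < N" "H n n = 0" "y < N"
  shows "H n y = 0"
proof (cases "y = n")
  case True thus ?thesis using assms by simp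
next
  case False
  define b where "b = H n y"
  have hy: "H y n = cnj b" using psd_hermitian[OF assms(1,2,4)] by (simp add: b_def)
  have Hyy: "Im (H y y) = 0" "0 \<le> Re (H y y)"
    using psd_diag_real psd_diag_nonneg assms by auto
  define r where "r = 1 / (Re (H y y) + 1)"
  have rpos: "r > 0" using Hyy by (simp add: r_def)
  \<comment> \<open>At e_n - r cnj(b) e_y the quadratic form is (r^2 H y y - 2 r) |b|^2, negative for this r unless b = 0.\<close>
  define v where "v = (\<lambda>x. if x = n then (1::complex) else if x = y then - of_real r * cnj b else 0)"
  have "0 \<le> Re (\<Sum>x<N. \<Sum>z<N. cnj (v x) * H x z * v z)" by (rule psd_nonneg[OF assms(1)])
  also have "(\<Sum>x<N. \<Sum>z<N. cnj (v x) * H x z * v z) =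
     cnj (- of_real r * cnj b) * H y y * (- of_real r * cnj b) + cnj (- of_real r * cnj b) * H y n * 1
      + cnj 1 * H n y * (- of_real r * cnj b) + cnj 1 * H n n * 1"
    unfolding v_def by (rule quadratic_form_two_points) (use assms False in auto)
  also have "\<dots> = of_real r * of_real r * H y y * (b * cnj b) - 2 * of_real r * (b * cnj b)"
    using assms(3) hy by (simp add: b_def[symmetric] algebra_simps)
  also have "\<dots> = of_real ((r * r * Re (H y y) - 2 * r) * (cmod b)^2)"
  proof -
    have e: "H y y = of_real (Re (H y y))" using Hyy by (simp add: complex_eq_iff)
    show ?thesis unfolding complex_norm_square[symmetric] by (subst e) (simp add: algebra_simps)
  qed
  also have "Re \<dots> = (r * r * Re (H y y) - 2 * r) * (cmod b)^2" by simp
  finally have "0 \<le> (r * r * Re (H y y) - 2 * r) * (cmod b)^2" .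
  moreover have "r * r * Re (H y y) - 2 * r < 0"
  proof -
    have "r * Re (H y y) < 1" using Hyy by (simp add: r_def)
    hence "r * (r * Re (H y y)) < r * 2" using rpos by (intro mult_strict_left_mono) auto
    thus ?thesis by (simp add: algebra_simps)
  qed
  ultimately have "(cmod b)^2 \<le> 0" by (smt (verit) mult_neg_pos zero_less_power2 power2_eq_square)
  thus ?thesis by (simp add: b_def)
qed

lemma psd_leading_block:
  assumes "psd (Suc n) H" shows "psd n H"
  unfolding psd_def
proof (intro conjI allI impI)
  fix x y assume "x < n" "y < n" thus "H y x = cnj (H x y)" using psd_hermitian[OF assms, of x y] by simp
next
  fix v :: "nat \<Rightarrow> complex"
  define v0 where "v0 = (\<lambda>x. if x = n then 0 else v x)"
  have "0 \<le> Re (\<Sum>x<Suc n. \<Sum>y<Suc n. cnj (v0 x) * H x y * v0 y)" by (rule psd_nonneg[OF assms])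
  also have "(\<Sum>x<Suc n. \<Sum>y<Suc n. cnj (v0 x) * H x y * v0 y) = (\<Sum>x<n. \<Sum>y<n. cnj (v x) * H x y * v y)"
    by (simp add: v0_def)
  finally show "0 \<le> Re (\<Sum>x<n. \<Sum>y<n. cnj (v x) * H x y * v y)" .
qed

lemma psd_schur_complement:
  fixes H :: "nat \<Rightarrow> nat \<Rightarrow> complex"
  assumes "psd (Suc n) H" "Im (H n n) = 0" "Re (H n n) > 0"
  shows "psd n (\<lambda>x y. H x y - H x n * H n y / H n n)"
  unfolding psd_def
proof (intro conjI allI impI)
  have hr: "cnj (H n n) = H n n" using assms(2) by (simp add: complex_eq_iff)
  fix x y assume "x < n" "y < n"
  hence "H y x = cnj (H x y)" "H y n = cnj (H n y)" "H n x = cnj (H x n)"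
    using psd_hermitian[OF assms(1), of x y] psd_hermitian[OF assms(1), of n y]
      psd_hermitian[OF assms(1), of x n] by auto
  thus "H y x - H y n * H n x / H n n = cnj (H x y - H x n * H n y / H n n)"
    using hr by (simp add: mult.commute)
next
  fix v :: "nat \<Rightarrow> complex"
  define h where "h = H n n"
  have hr: "cnj h = h" unfolding h_def using assms(2) by (simp add: complex_eq_iff)
  have h0: "h \<noteq> 0" unfolding h_def using assms(3) by auto
  define \<beta> where "\<beta> = (\<Sum>y<n. H n y * v y)"
  \<comment> \<open>Extending v by the last coordinate -\<beta>/h turns the quadratic form of H into that of the Schur complement.\<close>
  define v' where "v' = (\<lambda>x. if x = n then - \<beta> / h else v x)"
  have herm: "\<And>x. x < n \<Longrightarrow> H x n = cnj (H n x)" using psd_hermitian[OF assms(1), of n] by simp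
  have cb: "(\<Sum>x<n. cnj (v x) * H x n) = cnj \<beta>"
    unfolding \<beta>_def cnj_sum by (rule sum.cong) (auto simp: herm mult.commute)
  define Q0 where "Q0 = (\<Sum>x<n. \<Sum>y<n. cnj (v x) * H x y * v y)"
  have c: "H n n = h" by (simp add: h_def)
  have "(\<Sum>x<Suc n. \<Sum>y<Suc n. cnj (v' x) * H x y * v' y) =
      (\<Sum>x<n. (\<Sum>y<n. cnj (v x) * H x y * v y) + cnj (v x) * H x n * (- \<beta> / h))
       + ((\<Sum>y<n. cnj (- \<beta> / h) * H n y * v y) + cnj (- \<beta> / h) * h * (- \<beta> / h))"
  proof -
    have a: "v' n = - \<beta> / h" by (simp add: v'_def)
    have b: "\<And>x. x \<in> {..<n} \<Longrightarrow> v' x = v x" by (simp add: v'_def)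
    show ?thesis by (simp only: sum.lessThan_Suc a b c cong: sum.cong)
  qed
  also have "\<dots> = Q0 + cnj \<beta> * (- \<beta> / h) + cnj (- \<beta> / h) * \<beta> + cnj (- \<beta> / h) * h * (- \<beta> / h)"
  proof -
    have e1: "(\<Sum>x<n. cnj (v x) * H x n * (- \<beta> / h)) = cnj \<beta> * (- \<beta> / h)"
      by (subst sum_distrib_right[symmetric]) (simp only: cb)
    have e2: "(\<Sum>y<n. cnj (- \<beta> / h) * H n y * v y) = cnj (- \<beta> / h) * \<beta>"
      unfolding \<beta>_def by (simp add: sum_distrib_left mult.assoc)
    show ?thesis by (simp only: sum.distrib e1 e2 Q0_def[symmetric] add.assoc)
  qed
  also have "\<dots> = Q0 - cnj \<beta> * \<beta> / h"
  proof -
    have "cnj (- \<beta> / h) = - cnj \<beta> / h" using hr by simp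
    thus ?thesis using h0 by (simp add: field_simps)
  qed
  also have "\<dots> = (\<Sum>x<n. \<Sum>y<n. cnj (v x) * (H x y - H x n * H n y / H n n) * v y)"
  proof -
    have pw: "\<And>x y. cnj (v x) * (H x y - H x n * H n y / H n n) * v y
        = cnj (v x) * H x y * v y - (cnj (v x) * H x n) * (H n y * v y) / h"
      by (simp add: c algebra_simps)
    have "(\<Sum>x<n. \<Sum>y<n. (cnj (v x) * H x n) * (H n y * v y) / h)
        = (\<Sum>x<n. cnj (v x) * H x n) * (\<Sum>y<n. H n y * v y) / h"
      by (simp add: sum_product sum_divide_distrib)
    also have "\<dots> = cnj \<beta> * \<beta> / h" by (simp only: cb \<beta>_def[symmetric])
    finally show ?thesis by (simp only: pw sum_subtractf Q0_def)
  qed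
  finally have eq: "(\<Sum>x<Suc n. \<Sum>y<Suc n. cnj (v' x) * H x y * v' y) =
     (\<Sum>x<n. \<Sum>y<n. cnj (v x) * (H x y - H x n * H n y / H n n) * v y)" .
  show "0 \<le> Re (\<Sum>x<n. \<Sum>y<n. cnj (v x) * (H x y - H x n * H n y / H n n) * v y)"
    using psd_nonneg[OF assms(1), of v'] by (simp only: eq)
qed

lemma gram_factorization_extend_zero:
  fixes H :: "nat \<Rightarrow> nat \<Rightarrow> complex"
  assumes w: "\<forall>x<n. \<forall>y<n. H x y = (\<Sum>k<n. w k x * cnj (w k y))"
    and zero: "\<And>y. y < Suc n \<Longrightarrow> H n y = 0 \<and> H y n = 0"
  shows "\<exists>w'. \<forall>x<Suc n. \<forall>y<Suc n. H x y = (\<Sum>k<Suc n. w' k x * cnj (w' k y))"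
proof -
  define w' where "w' = (\<lambda>k x. if k < n \<and> x \<noteq> n then w k x else 0)"
  have "H x y = (\<Sum>k<Suc n. w' k x * cnj (w' k y))" if xy: "x < Suc n" "y < Suc n" for x y
  proof (cases "x = n \<or> y = n")
    case True thus ?thesis using zero xy by (auto simp: w'_def)
  next
    case False
    hence "x < n" "y < n" using xy by auto
    thus ?thesis using w by (simp add: w'_def)
  qed
  thus ?thesis by blast
qed

lemma gram_factorization_extend_schur:
  fixes H :: "nat \<Rightarrow> nat \<Rightarrow> complex"
  assumes w: "\<forall>x<n. \<forall>y<n. H x y - H x n * H n y / H n n = (\<Sum>k<n. w k x * cnj (w k y))"
    and herm: "\<And>y. y < Suc n \<Longrightarrow> cnj (H y n) = H n y"
    and diag: "Im (H n n) = 0" "0 < Re (H n n)"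
  shows "\<exists>w'. \<forall>x<Suc n. \<forall>y<Suc n. H x y = (\<Sum>k<Suc n. w' k x * cnj (w' k y))"
proof -
  have hn0: "H n n \<noteq> 0" using diag by auto
  define sh where "sh = complex_of_real (sqrt (Re (H n n)))"
  have sh2: "cnj sh * sh = H n n"
  proof -
    have "cnj sh * sh = complex_of_real (sqrt (Re (H n n)) * sqrt (Re (H n n)))"
      by (simp only: sh_def complex_cnj_complex_of_real of_real_mult)
    also have "\<dots> = complex_of_real (Re (H n n))" using diag(2) by (simp del: of_real_mult)
    also have "\<dots> = H n n" using diag(1) by (simp add: complex_eq_iff)
    finally show ?thesis .
  qed
  \<comment> \<open>The new last row is the column of H through n, scaled by 1/sqrt(H n n).\<close>
  define w' where "w' = (\<lambda>k x. if k < n then (if x = n then 0 else w k x) else H x n / cnj sh)"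
  have "H x y = (\<Sum>k<Suc n. w' k x * cnj (w' k y))" if xy: "x < Suc n" "y < Suc n" for x y
  proof -
    have "w' n x * cnj (w' n y) = H x n / cnj sh * (cnj (H y n) / sh)"
      by (simp add: w'_def)
    also have "\<dots> = H x n * H n y / (cnj sh * sh)"
      by (simp add: herm[OF xy(2)])
    also have "\<dots> = H x n * H n y / H n n" by (simp only: sh2)
    finally have last: "w' n x * cnj (w' n y) = H x n * H n y / H n n" .
    have "(\<Sum>k<Suc n. w' k x * cnj (w' k y)) = (\<Sum>k<n. w' k x * cnj (w' k y)) + H x n * H n y / H n n"
      by (simp add: last)
    also have "\<dots> = H x y"
    proof (cases "x = n \<or> y = n")
      case True
      hence "(\<Sum>k<n. w' k x * cnj (w' k y)) = 0" by (auto simp: w'_def)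
      thus ?thesis using True hn0 by auto
    next
      case False
      hence "x < n" "y < n" using xy by auto
      hence "(\<Sum>k<n. w' k x * cnj (w' k y)) = (\<Sum>k<n. w k x * cnj (w k y))"
        by (simp add: w'_def)
      thus ?thesis using w \<open>x < n\<close> \<open>y < n\<close> by (metis diff_add_cancel)
    qed
    finally show ?thesis by simp
  qed
  thus ?thesis by blast
qed

lemma psd_gram_factorization:
  "psd n H \<Longrightarrow> \<exists>w. \<forall>x<n. \<forall>y<n. H x y = (\<Sum>k<n. w k x * cnj (w k y))"
proof (induction n arbitrary: H)
  case 0 show ?case by simp
next
  case (Suc n)
  have Hr: "Im (H n n) = 0" "0 \<le> Re (H n n)"
    using psd_diag_real[OF Suc.prems] psd_diag_nonneg[OF Suc.prems] by auto
  have herm: "\<And>x y. x < Suc n \<Longrightarrow> y < Suc n \<Longrightarrow> H y x = cnj (H x y)"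
    using psd_hermitian[OF Suc.prems] by blast
  show ?case
  proof (cases "Re (H n n) = 0")
    case True
    hence "H n n = 0" using Hr by (simp add: complex_eq_iff)
    hence "H n y = 0 \<and> H y n = 0" if "y < Suc n" for y
      using psd_zero_diag_row[OF Suc.prems _ _ that] herm[OF _ that, of n] by simp
    moreover obtain w where "\<forall>x<n. \<forall>y<n. H x y = (\<Sum>k<n. w k x * cnj (w k y))"
      using Suc.IH[OF psd_leading_block[OF Suc.prems]] by blast
    ultimately show ?thesis by (intro gram_factorization_extend_zero) auto
  next
    case False
    hence "Re (H n n) > 0" using Hr by simp
    moreover obtain w where "\<forall>x<n. \<forall>y<n. H x y - H x n * H n y / H n n = (\<Sum>k<n. w k x * cnj (w k y))"
      using Suc.IH[OF psd_schur_complement[OF Suc.prems Hr(1)]] \<open>Re (H n n) > 0\<close> by blast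
    moreover have "cnj (H y n) = H n y" if "y < Suc n" for y
      using herm[of n y] that by simp
    ultimately show ?thesis using Hr(1) by (intro gram_factorization_extend_schur)
  qed
qed

section \<open>Vectors, sesquilinear forms and pure-state decompositions\<close>

definition sqnorm_on :: "'i set \<Rightarrow> ('i \<Rightarrow> complex) \<Rightarrow> real" where
  "sqnorm_on X u = (\<Sum>x\<in>X. (cmod (u x))\<^sup>2)"

definition sesq_on :: "'i set \<Rightarrow> ('i \<Rightarrow> complex) \<Rightarrow> ('i \<Rightarrow> 'i \<Rightarrow> complex) \<Rightarrow> ('i \<Rightarrow> complex) \<Rightarrow> complex" where
  "sesq_on X u A v = (\<Sum>x\<in>X. \<Sum>y\<in>X. cnj (u x) * A x y * v y)"

definition delta_vec :: "'i \<Rightarrow> 'i \<Rightarrow> complex" where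
  "delta_vec a = (\<lambda>x. if x = a then 1 else 0)"

lemma inner_on_self: "inner_on X u u = complex_of_real (sqnorm_on X u)"
  unfolding inner_on_def sqnorm_on_def of_real_sum
  by (rule sum.cong[OF refl]) (subst complex_norm_square, rule mult.commute)

lemma sqnorm_on_nonneg: "0 \<le> sqnorm_on X u"
  unfolding sqnorm_on_def by (simp add: sum_nonneg)

lemma sqnorm_on_eq_0_iff: "finite X \<Longrightarrow> sqnorm_on X u = 0 \<longleftrightarrow> (\<forall>x\<in>X. u x = 0)"
  unfolding sqnorm_on_def by (simp add: sum_nonneg_eq_0_iff)

lemma inner_on_self_eq_0_iff: "finite X \<Longrightarrow> inner_on X u u = 0 \<longleftrightarrow> (\<forall>x\<in>X. u x = 0)"
  by (simp add: inner_on_self sqnorm_on_eq_0_iff)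

lemma cnj_inner_on: "cnj (inner_on X u v) = inner_on X v u"
  unfolding inner_on_def by (simp add: mult.commute)

lemma inner_on_cong: "(\<And>x. x \<in> X \<Longrightarrow> u x = u' x) \<Longrightarrow> (\<And>x. x \<in> X \<Longrightarrow> v x = v' x) \<Longrightarrow>
    inner_on X u v = inner_on X u' v'"
  unfolding inner_on_def by simp

lemma sesq_on_cong: "(\<And>x. x \<in> X \<Longrightarrow> u x = u' x) \<Longrightarrow> (\<And>x. x \<in> X \<Longrightarrow> v x = v' x) \<Longrightarrow>
    sesq_on X u A v = sesq_on X u' A v'"
  unfolding sesq_on_def by simp

lemma inner_on_delta_vec: "finite X \<Longrightarrow> a \<in> X \<Longrightarrow> inner_on X (delta_vec a) v = v a"
  unfolding inner_on_def delta_vec_def by (subst sum.eq_single_point[of _ a]) auto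

lemma sesq_on_delta_vec:
  "finite X \<Longrightarrow> a \<in> X \<Longrightarrow> b \<in> X \<Longrightarrow> sesq_on X (delta_vec a) A (delta_vec b) = A a b"
proof -
  assume X: "finite X" "a \<in> X" "b \<in> X"
  have "(\<Sum>y\<in>X. cnj (delta_vec a x) * A x y * delta_vec b y) = cnj (delta_vec a x) * A x b * delta_vec b b" for x
    by (rule sum.eq_single_point[of _ b]) (use X in \<open>auto simp: delta_vec_def\<close>)
  hence row: "(\<Sum>y\<in>X. cnj (delta_vec a x) * A x y * delta_vec b y) = cnj (delta_vec a x) * A x b" for x
    by (simp add: delta_vec_def)
  have "(\<Sum>x\<in>X. cnj (delta_vec a x) * A x b) = cnj (delta_vec a a) * A a b"
    by (rule sum.eq_single_point[of _ a]) (use X in \<open>auto simp: delta_vec_def\<close>)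
  thus ?thesis unfolding sesq_on_def row by (simp add: delta_vec_def)
qed

lemma norm_le_sqrt_sqnorm_on: "finite X \<Longrightarrow> x \<in> X \<Longrightarrow> cmod (u x) \<le> sqrt (sqnorm_on X u)"
  unfolding sqnorm_on_def by (rule real_le_rsqrt, rule member_le_sum) auto

lemma density_op_psd: "density_op {..<n::nat} \<rho> \<Longrightarrow> psd n \<rho>"
  unfolding density_op_def psd_def by (meson lessThan_iff)

lemma pure_decomp_nonempty: "pure_decomp X \<rho> I p \<psi> \<Longrightarrow> I \<noteq> {}"
  unfolding pure_decomp_def by auto

text \<open>Normalise the rows of a Gram factorization of \<rho>.\<close>

lemma density_op_pure_decomp:
  fixes n :: nat
  assumes dens: "density_op {..<n} \<rho>"
  shows "\<exists>I p \<psi>. pure_decomp {..<n} \<rho> I p \<psi>"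
proof -
  obtain w where w: "\<forall>x<n. \<forall>y<n. \<rho> x y = (\<Sum>k<n. w k x * cnj (w k y))"
    using psd_gram_factorization[OF density_op_psd[OF dens]] by blast
  define p where "p k = sqnorm_on {..<n} (w k)" for k
  define I where "I = {k. k < n \<and> p k \<noteq> 0}"
  define \<psi> where "\<psi> k x = w k x / complex_of_real (sqrt (p k))" for k x
  have ppos: "\<forall>k\<in>I. 0 < p k" unfolding I_def p_def using sqnorm_on_nonneg
    by (metis (mono_tags, lifting) mem_Collect_eq order_le_less)
  have w0: "w k x = 0" if "k < n" "k \<notin> I" "x < n" for k x
    using that sqnorm_on_eq_0_iff[of "{..<n}" "w k"] by (auto simp: I_def p_def)
  have sq: "complex_of_real (sqrt (p k)) * complex_of_real (sqrt (p k)) = complex_of_real (p k)"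
    if "k \<in> I" for k
    using ppos that by (simp del: of_real_mult add: of_real_mult[symmetric] less_imp_le)
  have sqnz: "complex_of_real (sqrt (p k)) \<noteq> 0" if "k \<in> I" for k using ppos that by force
  have diag: "\<rho> x x = complex_of_real (\<Sum>k<n. (cmod (w k x))\<^sup>2)" if x: "x < n" for x
  proof -
    have "\<rho> x x = (\<Sum>k<n. w k x * cnj (w k x))" using w x by simp
    also have "\<dots> = complex_of_real (\<Sum>k<n. (cmod (w k x))\<^sup>2)"
      unfolding of_real_sum by (rule sum.cong[OF refl]) (rule complex_norm_square[symmetric])
    finally show ?thesis .
  qed
  have "(\<Sum>k\<in>I. p k) = (\<Sum>k<n. p k)"
    by (rule sum.mono_neutral_left) (auto simp: I_def)
  also have "\<dots> = (\<Sum>x<n. \<Sum>k<n. (cmod (w k x))\<^sup>2)" unfolding p_def sqnorm_on_def by (rule sum.swap)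
  finally have "complex_of_real (\<Sum>k\<in>I. p k) = (\<Sum>x<n. \<rho> x x)"
    by (simp add: of_real_sum diag)
  also have "\<dots> = 1" using dens unfolding density_op_def by blast
  finally have sum1: "sum p I = 1" by (metis of_real_eq_1_iff)
  have unit: "unit_vec {..<n} (\<psi> k)" if k: "k \<in> I" for k
  proof -
    have "inner_on {..<n} (\<psi> k) (\<psi> k) = inner_on {..<n} (w k) (w k) /
        (complex_of_real (sqrt (p k)) * complex_of_real (sqrt (p k)))"
      unfolding inner_on_def \<psi>_def by (simp add: sum_divide_distrib)
    also have "\<dots> = 1"
    proof -
      have "p k \<noteq> 0" using ppos k by force
      thus ?thesis using sq[OF k] by (simp add: inner_on_self p_def[symmetric])
    qed
    finally show ?thesis unfolding unit_vec_def .
  qed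
  have form: "\<rho> x y = (\<Sum>k\<in>I. complex_of_real (p k) * \<psi> k x * cnj (\<psi> k y))"
    if "x < n" "y < n" for x y
  proof -
    have "\<rho> x y = (\<Sum>k<n. w k x * cnj (w k y))" using w that by simp
    also have "\<dots> = (\<Sum>k\<in>I. w k x * cnj (w k y))"
      by (rule sum.mono_neutral_right) (use w0 that in \<open>auto simp: I_def\<close>)
    also have "\<dots> = (\<Sum>k\<in>I. complex_of_real (p k) * \<psi> k x * cnj (\<psi> k y))"
    proof (intro sum.cong refl)
      fix k assume k: "k \<in> I"
      show "w k x * cnj (w k y) = complex_of_real (p k) * \<psi> k x * cnj (\<psi> k y)"
        unfolding \<psi>_def using sq[OF k] sqnz[OF k] by (simp add: field_simps)
    qed
    finally show ?thesis .
  qed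
  have "pure_decomp {..<n} \<rho> I p \<psi>"
    unfolding pure_decomp_def using ppos sum1 unit form by (auto simp: I_def)
  thus ?thesis by blast
qed

lemma sesq_on_pure_decomp:
  assumes "pure_decomp Y \<sigma> I q \<phi>"
  shows "sesq_on Y u \<sigma> v = (\<Sum>k\<in>I. complex_of_real (q k) * inner_on Y u (\<phi> k) * inner_on Y (\<phi> k) v)"
proof -
  have "sesq_on Y u \<sigma> v =
      (\<Sum>f\<in>Y. \<Sum>g\<in>Y. cnj (u f) * (\<Sum>k\<in>I. (complex_of_real (q k) * \<phi> k f) * cnj (\<phi> k g)) * v g)"
    unfolding sesq_on_def using assms unfolding pure_decomp_def by (intro sum.cong refl) auto
  also have "\<dots> = (\<Sum>k\<in>I. (\<Sum>f\<in>Y. cnj (u f) * (complex_of_real (q k) * \<phi> k f)) * (\<Sum>g\<in>Y. cnj (\<phi> k g) * v g))"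
    by (rule sum_sandwich)
  also have "\<dots> = (\<Sum>k\<in>I. complex_of_real (q k) * inner_on Y u (\<phi> k) * inner_on Y (\<phi> k) v)"
    unfolding inner_on_def by (intro sum.cong refl) (simp add: sum_distrib_left mult_ac)
  finally show ?thesis .
qed

lemma pure_decomp_orthogonal:
  assumes D: "pure_decomp Y \<sigma> I q \<phi>" and zero: "sesq_on Y u \<sigma> u = 0" and k: "k \<in> I"
  shows "inner_on Y u (\<phi> k) = 0"
proof -
  have finI: "finite I" and qpos: "\<forall>k\<in>I. 0 < q k" using D unfolding pure_decomp_def by auto
  have "sesq_on Y u \<sigma> u = complex_of_real (\<Sum>k\<in>I. q k * (cmod (inner_on Y u (\<phi> k)))\<^sup>2)"
    unfolding sesq_on_pure_decomp[OF D] of_real_sum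
    by (intro sum.cong refl)
      (simp only: of_real_mult complex_norm_square cnj_inner_on[of Y u, symmetric] mult.assoc)
  hence "(\<Sum>k\<in>I. q k * (cmod (inner_on Y u (\<phi> k)))\<^sup>2) = 0"
    using zero by (metis of_real_eq_0_iff)
  hence "q k * (cmod (inner_on Y u (\<phi> k)))\<^sup>2 = 0"
    using finI k qpos by (subst (asm) sum_nonneg_eq_0_iff) (auto intro: less_imp_le)
  thus ?thesis using qpos k by force
qed

section \<open>Isometric embeddings and pure-state decompositions\<close>

definition op_apply :: "'i set \<Rightarrow> ('j \<Rightarrow> 'i \<Rightarrow> complex) \<Rightarrow> ('i \<Rightarrow> complex) \<Rightarrow> 'j \<Rightarrow> complex" where
  "op_apply X L \<psi> f = (\<Sum>x\<in>X. L f x * \<psi> x)"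

definition op_adj_apply :: "'j set \<Rightarrow> ('j \<Rightarrow> 'i \<Rightarrow> complex) \<Rightarrow> ('j \<Rightarrow> complex) \<Rightarrow> 'i \<Rightarrow> complex" where
  "op_adj_apply Y L u x = (\<Sum>f\<in>Y. cnj (L f x) * u f)"

lemma inner_on_op_apply: "inner_on Y u (op_apply X L \<psi>) = inner_on X (op_adj_apply Y L u) \<psi>"
proof -
  have "inner_on Y u (op_apply X L \<psi>) = (\<Sum>f\<in>Y. \<Sum>x\<in>X. cnj (u f) * L f x * \<psi> x)"
    unfolding inner_on_def op_apply_def by (simp add: sum_distrib_left mult_ac)
  also have "\<dots> = (\<Sum>x\<in>X. \<Sum>f\<in>Y. cnj (u f) * L f x * \<psi> x)" by (rule sum.swap)
  also have "\<dots> = inner_on X (op_adj_apply Y L u) \<psi>"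
    unfolding inner_on_def op_adj_apply_def by (simp add: sum_distrib_left sum_distrib_right mult_ac)
  finally show ?thesis .
qed

lemma op_apply_delta_vec: "finite X \<Longrightarrow> a \<in> X \<Longrightarrow> op_apply X L (delta_vec a) f = L f a"
  unfolding op_apply_def delta_vec_def by (subst sum.eq_single_point[of _ a]) auto

lemma isometry_on_adj_apply:
  assumes iso: "isometry_on X Y L" and X: "finite X" "x \<in> X"
  shows "op_adj_apply Y L (op_apply X L \<psi>) x = \<psi> x"
proof -
  have "op_adj_apply Y L (op_apply X L \<psi>) x = (\<Sum>f\<in>Y. \<Sum>y\<in>X. cnj (L f x) * L f y * \<psi> y)"
    unfolding op_adj_apply_def op_apply_def by (simp add: sum_distrib_left mult_ac)
  also have "\<dots> = (\<Sum>y\<in>X. (\<Sum>f\<in>Y. cnj (L f x) * L f y) * \<psi> y)"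
    by (subst sum.swap) (simp add: sum_distrib_right)
  also have "\<dots> = (\<Sum>y\<in>X. (if x = y then 1 else 0) * \<psi> y)"
    using iso X(2) unfolding isometry_on_def by (intro sum.cong refl) simp
  also have "\<dots> = \<psi> x" by (subst sum.eq_single_point[of _ x]) (use X in auto)
  finally show ?thesis .
qed

lemma isometry_on_inner:
  assumes "isometry_on X Y L" "finite X"
  shows "inner_on Y (op_apply X L \<psi>) (op_apply X L \<phi>) = inner_on X \<psi> \<phi>"
  unfolding inner_on_op_apply using isometry_on_adj_apply[OF assms]
  by (intro inner_on_cong) simp_all

lemma sesq_on_conj_op:
  "sesq_on Y u (conj_op X L \<rho>) v = sesq_on X (op_adj_apply Y L u) \<rho> (op_adj_apply Y L v)"
proof -
  have "sesq_on Y u (conj_op X L \<rho>) v =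
      (\<Sum>a\<in>X. \<Sum>b\<in>X. (\<Sum>f\<in>Y. cnj (u f) * L f a) * \<rho> a b * (\<Sum>g\<in>Y. cnj (L g b) * v g))"
    unfolding sesq_on_def conj_op_def by (rule double_sum_sandwich)
  also have "\<dots> = sesq_on X (op_adj_apply Y L u) \<rho> (op_adj_apply Y L v)"
    unfolding sesq_on_def op_adj_apply_def by (simp add: mult.commute)
  finally show ?thesis .
qed

lemma pure_decomp_conj_op:
  assumes iso: "isometry_on X Y L" "finite X" and D: "pure_decomp X \<rho> I p \<psi>"
  shows "pure_decomp Y (conj_op X L \<rho>) I p (\<lambda>k. op_apply X L (\<psi> k))"
proof -
  have unit: "\<forall>k\<in>I. unit_vec Y (op_apply X L (\<psi> k))"
    using D unfolding pure_decomp_def unit_vec_def by (simp add: isometry_on_inner[OF iso])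
  have "conj_op X L \<rho> f g = (\<Sum>k\<in>I. complex_of_real (p k) * op_apply X L (\<psi> k) f * cnj (op_apply X L (\<psi> k) g))"
    for f g
  proof -
    have "conj_op X L \<rho> f g =
        (\<Sum>a\<in>X. \<Sum>b\<in>X. L f a * (\<Sum>k\<in>I. (complex_of_real (p k) * \<psi> k a) * cnj (\<psi> k b)) * cnj (L g b))"
      unfolding conj_op_def using D unfolding pure_decomp_def by (intro sum.cong refl) auto
    also have "\<dots> = (\<Sum>k\<in>I. (\<Sum>a\<in>X. L f a * (complex_of_real (p k) * \<psi> k a)) * (\<Sum>b\<in>X. cnj (\<psi> k b) * cnj (L g b)))"
      by (rule sum_sandwich)
    also have "\<dots> = (\<Sum>k\<in>I. complex_of_real (p k) * op_apply X L (\<psi> k) f * cnj (op_apply X L (\<psi> k) g))"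
      unfolding op_apply_def by (intro sum.cong refl) (simp add: sum_distrib_left mult_ac)
    finally show ?thesis .
  qed
  thus ?thesis using D unit unfolding pure_decomp_def by blast
qed

text \<open>The residual r of \<phi> after projecting onto the range of L is killed by the adjoint of L, so
  the quadratic form of the conjugated state vanishes at r, which forces r to be orthogonal to \<phi>.\<close>

lemma conj_op_pure_decomp_in_range:
  assumes iso: "isometry_on X Y L" "finite X" and Y: "finite Y"
    and D: "pure_decomp Y (conj_op X L \<rho>) I q \<phi>" and k: "k \<in> I" and f: "f \<in> Y"
  shows "\<phi> k f = op_apply X L (op_adj_apply Y L (\<phi> k)) f"
proof -
  define \<psi> where "\<psi> = op_adj_apply Y L (\<phi> k)"
  define r where "r g = \<phi> k g - op_apply X L \<psi> g" for g
  have adj_r: "op_adj_apply Y L r x = 0" if "x \<in> X" for x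
  proof -
    have "op_adj_apply Y L r x = \<psi> x - op_adj_apply Y L (op_apply X L \<psi>) x"
      unfolding r_def \<psi>_def op_adj_apply_def by (simp add: right_diff_distrib sum_subtractf)
    thus ?thesis using isometry_on_adj_apply[OF iso that] by simp
  qed
  have "sesq_on Y r (conj_op X L \<rho>) r = 0"
    by (simp only: sesq_on_conj_op) (simp add: sesq_on_def adj_r)
  hence "inner_on Y r (\<phi> k) = 0" by (rule pure_decomp_orthogonal[OF D _ k])
  moreover have "inner_on Y r (op_apply X L \<psi>) = 0"
    by (simp only: inner_on_op_apply) (simp add: inner_on_def adj_r)
  ultimately have "inner_on Y r r = 0"
    unfolding inner_on_def r_def[of g for g] by (simp add: right_diff_distrib sum_subtractf)
  hence "r f = 0" using inner_on_self_eq_0_iff[OF Y] f by blast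
  thus ?thesis unfolding r_def \<psi>_def by simp
qed

lemma conj_op_pure_decomp_pullback:
  assumes iso: "isometry_on X Y L" "finite X" and Y: "finite Y"
    and D: "pure_decomp Y (conj_op X L \<rho>) I q \<phi>"
  shows "pure_decomp X \<rho> I q (\<lambda>k. op_adj_apply Y L (\<phi> k))"
proof -
  let ?\<psi> = "\<lambda>k. op_adj_apply Y L (\<phi> k)"
  note range = conj_op_pure_decomp_in_range[OF iso Y D]
  have unit: "unit_vec X (?\<psi> k)" if k: "k \<in> I" for k
  proof -
    have "inner_on X (?\<psi> k) (?\<psi> k) = inner_on Y (op_apply X L (?\<psi> k)) (op_apply X L (?\<psi> k))"
      by (rule isometry_on_inner[OF iso, symmetric])
    also have "\<dots> = inner_on Y (\<phi> k) (\<phi> k)" using range[OF k] by (intro inner_on_cong) simp_all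
    also have "\<dots> = 1" using D k unfolding pure_decomp_def unit_vec_def by blast
    finally show ?thesis unfolding unit_vec_def .
  qed
  have "\<rho> a b = (\<Sum>k\<in>I. complex_of_real (q k) * ?\<psi> k a * cnj (?\<psi> k b))" if ab: "a \<in> X" "b \<in> X" for a b
  proof -
    have "\<rho> a b = sesq_on X (delta_vec a) \<rho> (delta_vec b)"
      using sesq_on_delta_vec[OF iso(2) ab] by simp
    also have "\<dots> = sesq_on X (op_adj_apply Y L (op_apply X L (delta_vec a))) \<rho>
        (op_adj_apply Y L (op_apply X L (delta_vec b)))"
      using isometry_on_adj_apply[OF iso] by (intro sesq_on_cong) simp_all
    also have "\<dots> = sesq_on Y (op_apply X L (delta_vec a)) (conj_op X L \<rho>) (op_apply X L (delta_vec b))"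
      by (rule sesq_on_conj_op[symmetric])
    also have "\<dots> = (\<Sum>k\<in>I. complex_of_real (q k) * ?\<psi> k a * cnj (?\<psi> k b))"
      unfolding sesq_on_pure_decomp[OF D]
    proof (intro sum.cong refl)
      fix k
      have "inner_on Y (op_apply X L (delta_vec a)) (\<phi> k) = cnj (inner_on X (?\<psi> k) (delta_vec a))"
        by (simp only: cnj_inner_on[of Y "\<phi> k", symmetric] inner_on_op_apply)
      also have "\<dots> = ?\<psi> k a"
        by (simp only: cnj_inner_on inner_on_delta_vec[OF iso(2) ab(1)])
      finally have ea: "inner_on Y (op_apply X L (delta_vec a)) (\<phi> k) = ?\<psi> k a" .
      have "inner_on Y (\<phi> k) (op_apply X L (delta_vec b)) = cnj (inner_on X (delta_vec b) (?\<psi> k))"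
        by (simp only: inner_on_op_apply cnj_inner_on)
      hence eb: "inner_on Y (\<phi> k) (op_apply X L (delta_vec b)) = cnj (?\<psi> k b)"
        by (simp only: inner_on_delta_vec[OF iso(2) ab(2)])
      show "complex_of_real (q k) * inner_on Y (op_apply X L (delta_vec a)) (\<phi> k) *
          inner_on Y (\<phi> k) (op_apply X L (delta_vec b)) = complex_of_real (q k) * ?\<psi> k a * cnj (?\<psi> k b)"
        by (simp only: ea eb)
    qed
    finally show ?thesis .
  qed
  thus ?thesis using D unit unfolding pure_decomp_def by blast
qed

section \<open>Producible vectors\<close>

lemma mp_idx_fun_upd: "f \<in> mp_idx N dims \<Longrightarrow> l < N \<Longrightarrow> a < dims l \<Longrightarrow> f(l := a) \<in> mp_idx N dims"
  unfolding mp_idx_def by (auto simp: PiE_iff extensional_def)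

lemma producible_pure_block_product:
  fixes v F :: "(nat \<Rightarrow> nat) \<Rightarrow> complex"
  assumes B0: "B0 \<subseteq> {..<N}" "B0 \<noteq> {}"
    and v: "\<forall>f\<in>mp_idx N dims. v f = F (restrict f B0) * (\<Prod>l\<in>{..<N} - B0. h l (f l))"
  shows "producible_pure N dims (card B0) v"
proof -
  define R where "R = {..<N} - B0"
  define P where "P = insert B0 ((\<lambda>l. {l}) ` R)"
  define \<phi> where "\<phi> = (\<lambda>B (g :: nat \<Rightarrow> nat). if B = B0 then F g else h (the_elem B) (g (the_elem B)))"
  have "finite B0" using B0(1) finite_subset by blast
  hence c1: "1 \<le> card B0" using B0(2) by (simp add: Suc_le_eq card_gt_0_iff)
  have nB0: "\<And>l. l \<in> R \<Longrightarrow> {l} \<noteq> B0" unfolding R_def by auto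
  have part: "partition_on {..<N} P"
    unfolding partition_on_def disjoint_def P_def R_def using B0 by auto
  have card: "\<forall>B\<in>P. card B \<le> card B0" unfolding P_def using c1 by auto
  have "v f = (\<Prod>B\<in>P. \<phi> B (restrict f B))" if f: "f \<in> mp_idx N dims" for f
  proof -
    have "B0 \<notin> (\<lambda>l. {l}) ` R" using nB0 by auto
    hence "(\<Prod>B\<in>P. \<phi> B (restrict f B)) = \<phi> B0 (restrict f B0) * (\<Prod>B\<in>(\<lambda>l. {l}) ` R. \<phi> B (restrict f B))"
      unfolding P_def by (simp add: R_def)
    also have "(\<Prod>B\<in>(\<lambda>l. {l}) ` R. \<phi> B (restrict f B)) = (\<Prod>l\<in>R. \<phi> {l} (restrict f {l}))"
      by (subst prod.reindex) (auto simp: inj_on_def)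
    also have "\<dots> = (\<Prod>l\<in>R. h l (f l))"
      by (intro prod.cong refl) (simp add: \<phi>_def nB0)
    also have "\<phi> B0 (restrict f B0) = F (restrict f B0)" by (simp add: \<phi>_def)
    finally have "(\<Prod>B\<in>P. \<phi> B (restrict f B)) = F (restrict f B0) * (\<Prod>l\<in>R. h l (f l))" .
    moreover have "v f = F (restrict f B0) * (\<Prod>l\<in>R. h l (f l))" using v f unfolding R_def by blast
    ultimately show ?thesis by simp
  qed
  thus ?thesis unfolding producible_pure_def using part card by blast
qed

lemma producible_pure_mono:
  "producible_pure N dims k v \<Longrightarrow> k \<le> k' \<Longrightarrow> producible_pure N dims k' v"
  unfolding producible_pure_def by (meson order.trans)

lemma not_producible_pure_zero:
  assumes "0 < N" shows "\<not> producible_pure N dims 0 v"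
proof
  assume "producible_pure N dims 0 v"
  then obtain P where P: "partition_on {..<N} P" "\<forall>B\<in>P. card B \<le> 0"
    unfolding producible_pure_def by blast
  have "B = {}" if B: "B \<in> P" for B
  proof -
    have "B \<subseteq> {..<N}" using P(1) B unfolding partition_on_def by auto
    hence "finite B" using finite_subset by blast
    thus ?thesis using P(2) B by auto
  qed
  hence "P = {}" using P(1) unfolding partition_on_def by auto
  thus False using P(1) assms unfolding partition_on_def by auto
qed

lemma not_producible_zero:
  assumes "0 < N" shows "\<not> producible N dims 0 \<rho>"
proof
  assume "producible N dims 0 \<rho>"
  then obtain I p \<phi> where D: "pure_decomp (mp_idx N dims) \<rho> I p \<phi>"
    and pp: "\<forall>i\<in>I. producible_pure N dims 0 (\<phi> i)"
    unfolding producible_def by blast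
  obtain i where "i \<in> I" using pure_decomp_nonempty[OF D] by blast
  thus False using pp not_producible_pure_zero[OF assms] by blast
qed

lemma ent_depth_eqI:
  "producible N dims k \<rho> \<Longrightarrow> (\<And>j. producible N dims j \<rho> \<Longrightarrow> k \<le> j) \<Longrightarrow> ent_depth N dims \<rho> = k"
  unfolding ent_depth_def by (rule Least_equality)

text \<open>A product over blocks that never contain both l1 and l2 is a rank-one function of the
  entries at l1 and l2, hence satisfies the cross-ratio identity below.\<close>

lemma prod_blocks_cross_ratio:
  fixes \<phi> :: "'a set \<Rightarrow> ('a \<Rightarrow> 'b) \<Rightarrow> 'c::comm_monoid_mult"
  assumes sep: "\<forall>B\<in>P. l1 \<notin> B \<or> l2 \<notin> B"
  defines "F \<equiv> \<lambda>g. \<Prod>B\<in>P. \<phi> B (restrict g B)"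
  shows "F (f(l1 := p, l2 := y)) * F (f(l1 := p', l2 := y')) = F (f(l1 := p, l2 := y')) * F (f(l1 := p', l2 := y))"
proof -
  have "\<phi> B (restrict (f(l1 := p, l2 := y)) B) * \<phi> B (restrict (f(l1 := p', l2 := y')) B) =
      \<phi> B (restrict (f(l1 := p, l2 := y')) B) * \<phi> B (restrict (f(l1 := p', l2 := y)) B)" if "B \<in> P" for B
  proof (cases "l2 \<in> B")
    case True
    hence "l1 \<notin> B" using sep that by blast
    hence "restrict (f(l1 := a, l2 := b)) B = restrict (f(l1 := a', l2 := b)) B" for a a' b
      by (auto simp: restrict_def)
    thus ?thesis by (metis mult.commute)
  next
    case False
    hence "restrict (f(l1 := a, l2 := b)) B = restrict (f(l1 := a, l2 := b')) B" for a b b'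
      by (auto simp: restrict_def)
    thus ?thesis by metis
  qed
  thus ?thesis unfolding F_def prod.distrib[symmetric] by (rule prod.cong[OF refl])
qed

lemma partition_on_separates:
  assumes "partition_on A P" "B0 \<in> P" "l1 \<in> B0" "l2 \<notin> B0"
  shows "\<forall>B\<in>P. l1 \<notin> B \<or> l2 \<notin> B"
  using assms unfolding partition_on_def disjoint_def by blast

section \<open>Coordinates with respect to a linearly independent classical basis\<close>

locale classical_basis =
  fixes d :: nat and \<chi> :: "nat \<Rightarrow> nat \<Rightarrow> complex"
  assumes unit: "\<forall>i<d. unit_vec {..<d} (\<chi> i)"
    and indep: "lin_indep_on {..<d} {..<d} \<chi>"
    and span: "spans_on {..<d} {..<d} \<chi>"
begin

abbreviation norm2 :: "(nat \<Rightarrow> complex) \<Rightarrow> real" where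
  "norm2 \<equiv> sqnorm_on {..<d}"

abbreviation NR :: "(nat \<Rightarrow> complex) \<Rightarrow> nat" where
  "NR \<equiv> nonclassical_rank {..<d} {..<d} \<chi>"

abbreviation NN :: "(nat \<Rightarrow> nat \<Rightarrow> complex) \<Rightarrow> nat" where
  "NN \<equiv> nonclassical_number {..<d} {..<d} \<chi>"

text \<open>dual i a is the i-th coordinate of the standard basis vector e_a, i.e. dual is the inverse of
  the matrix with columns \<chi> i.\<close>

definition dual :: "nat \<Rightarrow> nat \<Rightarrow> complex" where
  "dual i a = (SOME c. \<forall>x\<in>{..<d}. delta_vec a x = (\<Sum>s\<in>{..<d}. c s * \<chi> s x)) i"

definition coord :: "(nat \<Rightarrow> complex) \<Rightarrow> nat \<Rightarrow> complex" where
  "coord v i = (\<Sum>a<d. dual i a * v a)"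

lemma dual_expansion: "x < d \<Longrightarrow> delta_vec a x = (\<Sum>s<d. dual s a * \<chi> s x)"
proof -
  assume x: "x < d"
  have "\<exists>c. \<forall>x\<in>{..<d}. delta_vec a x = (\<Sum>s\<in>{..<d}. c s * \<chi> s x)"
    using span unfolding spans_on_def by blast
  from someI_ex[OF this] show ?thesis using x unfolding dual_def by simp
qed

lemma coord_expansion: "x < d \<Longrightarrow> v x = (\<Sum>i<d. coord v i * \<chi> i x)"
proof -
  assume x: "x < d"
  have "(\<Sum>i<d. coord v i * \<chi> i x) = (\<Sum>i<d. \<Sum>a<d. dual i a * v a * \<chi> i x)"
    unfolding coord_def by (simp add: sum_distrib_right)
  also have "\<dots> = (\<Sum>a<d. v a * (\<Sum>i<d. dual i a * \<chi> i x))"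
    by (subst sum.swap) (simp add: sum_distrib_left mult_ac)
  also have "\<dots> = (\<Sum>a<d. v a * delta_vec a x)" using dual_expansion[OF x] by simp
  also have "\<dots> = v x" using x by (subst sum.eq_single_point[of _ x]) (auto simp: delta_vec_def)
  finally show ?thesis by simp
qed

lemma coord_unique:
  assumes "\<forall>x<d. v x = (\<Sum>i<d. c i * \<chi> i x)" "i < d"
  shows "c i = coord v i"
proof -
  have "(\<Sum>s\<in>{..<d}. (c s - coord v s) * \<chi> s x) = 0" if x: "x \<in> {..<d}" for x
  proof -
    have "(\<Sum>s\<in>{..<d}. (c s - coord v s) * \<chi> s x) =
        (\<Sum>s<d. c s * \<chi> s x) - (\<Sum>s<d. coord v s * \<chi> s x)"
      by (simp add: left_diff_distrib sum_subtractf)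
    also have "\<dots> = v x - v x" using assms(1) x coord_expansion[of x v] by simp
    finally show ?thesis by simp
  qed
  moreover have "(\<forall>x\<in>{..<d}. (\<Sum>s\<in>{..<d}. (c s - coord v s) * \<chi> s x) = 0) \<longrightarrow>
      (\<forall>s\<in>{..<d}. c s - coord v s = 0)"
    using indep unfolding lin_indep_on_def by (rule spec)
  ultimately have "\<forall>s\<in>{..<d}. c s - coord v s = 0" by blast
  thus ?thesis using assms(2) by simp
qed

definition support :: "(nat \<Rightarrow> complex) \<Rightarrow> nat set" where
  "support \<psi> = {i. i < d \<and> coord \<psi> i \<noteq> 0}"

lemma support_subset: "support \<psi> \<subseteq> {..<d}"
  unfolding support_def by auto

lemma finite_support: "finite (support \<psi>)"
  using support_subset finite_subset by blast

lemma support_expansion: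
  assumes "x < d" shows "\<psi> x = (\<Sum>s\<in>support \<psi>. coord \<psi> s * \<chi> s x)"
proof -
  have "\<psi> x = (\<Sum>s<d. coord \<psi> s * \<chi> s x)" by (rule coord_expansion[OF assms])
  also have "\<dots> = (\<Sum>s\<in>support \<psi>. coord \<psi> s * \<chi> s x)"
    by (rule sum.mono_neutral_right) (auto simp: support_def)
  finally show ?thesis .
qed

lemma nonclassical_rank_eq_card_support: "NR \<psi> = card (support \<psi>)"
  unfolding nonclassical_rank_def
proof (rule Least_equality)
  show "\<exists>S\<subseteq>{..<d}. card S = card (support \<psi>) \<and>
      (\<exists>c. (\<forall>s\<in>S. c s \<noteq> 0) \<and> (\<forall>x\<in>{..<d}. \<psi> x = (\<Sum>s\<in>S. c s * \<chi> s x)))"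
    using support_subset support_expansion
    by (intro exI[of _ "support \<psi>"] conjI exI[of _ "coord \<psi>"]) (auto simp: support_def)
next
  fix r assume "\<exists>S\<subseteq>{..<d}. card S = r \<and>
      (\<exists>c. (\<forall>s\<in>S. c s \<noteq> 0) \<and> (\<forall>x\<in>{..<d}. \<psi> x = (\<Sum>s\<in>S. c s * \<chi> s x)))"
  then obtain S c where S: "S \<subseteq> {..<d}" "card S = r" "\<forall>s\<in>S. c s \<noteq> 0"
    "\<forall>x\<in>{..<d}. \<psi> x = (\<Sum>s\<in>S. c s * \<chi> s x)" by blast
  define c' where "c' = (\<lambda>i. if i \<in> S then c i else 0)"
  have "\<psi> x = (\<Sum>i<d. c' i * \<chi> i x)" if "x < d" for x
  proof -
    have "\<psi> x = (\<Sum>s\<in>S. c' s * \<chi> s x)" using S(4) that by (simp add: c'_def)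
    also have "\<dots> = (\<Sum>i<d. c' i * \<chi> i x)"
      by (rule sum.mono_neutral_left) (use S(1) in \<open>auto simp: c'_def\<close>)
    finally show ?thesis .
  qed
  hence cc: "\<And>i. i < d \<Longrightarrow> c' i = coord \<psi> i" using coord_unique by blast
  have "S = support \<psi>"
  proof (intro set_eqI iffI)
    fix i assume "i \<in> S"
    thus "i \<in> support \<psi>" using S(1,3) cc[of i] by (auto simp: support_def c'_def)
  next
    fix i assume "i \<in> support \<psi>"
    thus "i \<in> S" using cc[of i] by (auto simp: support_def c'_def split: if_splits)
  qed
  thus "card (support \<psi>) \<le> r" using S(2) by simp
qed

lemma support_nonempty: "unit_vec {..<d} \<psi> \<Longrightarrow> support \<psi> \<noteq> {}"
proof
  assume u: "unit_vec {..<d} \<psi>" and e: "support \<psi> = {}"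
  have "\<forall>x<d. \<psi> x = 0" using support_expansion[of _ \<psi>] e by simp
  hence "inner_on {..<d} \<psi> \<psi> = 0" unfolding inner_on_def by simp
  thus False using u unfolding unit_vec_def by simp
qed

lemma nonclassical_number_attained:
  assumes "density_op {..<d} \<rho>"
  shows "\<exists>I p \<psi>. pure_decomp {..<d} \<rho> I p \<psi> \<and> (\<forall>i\<in>I. NR (\<psi> i) \<le> NN \<rho>)"
proof -
  obtain I p \<psi> where "pure_decomp {..<d} \<rho> I p \<psi>" using density_op_pure_decomp[OF assms] by blast
  moreover have "NR (\<psi> i) \<le> d" for i
    unfolding nonclassical_rank_eq_card_support using card_mono[OF _ support_subset] by simp
  ultimately have "\<exists>k I p \<psi>. pure_decomp {..<d} \<rho> I p \<psi> \<and> (\<forall>i\<in>I. NR (\<psi> i) \<le> k)" by blast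
  thus ?thesis unfolding nonclassical_number_def by (rule LeastI_ex)
qed

lemma nonclassical_number_le:
  "pure_decomp {..<d} \<rho> I p \<psi> \<Longrightarrow> \<forall>i\<in>I. NR (\<psi> i) \<le> k \<Longrightarrow> NN \<rho> \<le> k"
  unfolding nonclassical_number_def by (rule Least_le) blast

lemma nonclassical_number_pos:
  assumes "density_op {..<d} \<rho>" shows "1 \<le> NN \<rho>"
proof -
  obtain I p \<psi> where D: "pure_decomp {..<d} \<rho> I p \<psi>" "\<forall>i\<in>I. NR (\<psi> i) \<le> NN \<rho>"
    using nonclassical_number_attained[OF assms] by blast
  obtain i where i: "i \<in> I" using pure_decomp_nonempty[OF D(1)] by blast
  have "unit_vec {..<d} (\<psi> i)" using D(1) i unfolding pure_decomp_def by blast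
  hence "1 \<le> card (support (\<psi> i))"
    using support_nonempty finite_support by (simp add: Suc_le_eq card_gt_0_iff)
  thus ?thesis using D(2) i nonclassical_rank_eq_card_support by fastforce
qed

end

section \<open>Shrinking the Gram matrix of the classical basis\<close>

context classical_basis
begin

definition gram :: "nat \<Rightarrow> nat \<Rightarrow> complex" where
  "gram i j = inner_on {..<d} (\<chi> i) (\<chi> j)"

lemma gram_diag: "i < d \<Longrightarrow> gram i i = 1"
  using unit unfolding gram_def unit_vec_def by simp

lemma sesq_on_gram: "sesq_on {..<d} c gram c = complex_of_real (norm2 (\<lambda>x. \<Sum>j<d. c j * \<chi> j x))"
  unfolding sesq_on_def gram_def inner_on_def inner_on_self[symmetric]
  by (rule gram_quadratic_form[symmetric])

definition dual_bound :: real where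
  "dual_bound = (\<Sum>i<d. (\<Sum>a<d. cmod (dual i a))\<^sup>2)"

lemma dual_bound_nonneg: "0 \<le> dual_bound"
  unfolding dual_bound_def by (simp add: sum_nonneg)

lemma norm2_coord_le: "(\<Sum>i<d. (cmod (coord u i))\<^sup>2) \<le> dual_bound * norm2 u"
proof -
  have "(cmod (coord u i))\<^sup>2 \<le> (\<Sum>a<d. cmod (dual i a))\<^sup>2 * norm2 u" for i
  proof -
    have "cmod (coord u i) \<le> (\<Sum>a<d. cmod (dual i a) * cmod (u a))"
      unfolding coord_def by (rule order.trans[OF norm_sum]) (simp add: norm_mult)
    also have "\<dots> \<le> (\<Sum>a<d. cmod (dual i a) * sqrt (norm2 u))"
      by (intro sum_mono mult_left_mono norm_le_sqrt_sqnorm_on) auto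
    also have "\<dots> = (\<Sum>a<d. cmod (dual i a)) * sqrt (norm2 u)" by (simp add: sum_distrib_right)
    finally have "(cmod (coord u i))\<^sup>2 \<le> ((\<Sum>a<d. cmod (dual i a)) * sqrt (norm2 u))\<^sup>2"
      by (intro power_mono) auto
    also have "\<dots> = (\<Sum>a<d. cmod (dual i a))\<^sup>2 * norm2 u"
      using sqnorm_on_nonneg[of "{..<d}" u] by (simp add: power_mult_distrib)
    finally show ?thesis .
  qed
  hence "(\<Sum>i<d. (cmod (coord u i))\<^sup>2) \<le> (\<Sum>i<d. (\<Sum>a<d. cmod (dual i a))\<^sup>2 * norm2 u)"
    by (intro sum_mono) auto
  also have "\<dots> = dual_bound * norm2 u" unfolding dual_bound_def by (simp add: sum_distrib_right)
  finally show ?thesis .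
qed

definition eps :: real where
  "eps = 1 / (2 * (dual_bound + 1))"

lemma eps_pos: "0 < eps" and eps_le_half: "eps \<le> 1/2"
  using dual_bound_nonneg by (auto simp: eps_def field_simps)

text \<open>Subtracting eps from the diagonal of the Gram matrix keeps it positive definite because the
  basis is linearly independent; after rescaling by 1/(1 - eps) the diagonal is 1 again, while every
  off-diagonal entry has been divided by 1 - eps. The ancillas restore this factor later.\<close>

definition gram_shrunk :: "nat \<Rightarrow> nat \<Rightarrow> complex" where
  "gram_shrunk i j = (gram i j - (if i = j then complex_of_real eps else 0)) / complex_of_real (1 - eps)"

lemma gram_shrunk_diag: "i < d \<Longrightarrow> gram_shrunk i i = 1"
  using eps_le_half by (simp add: gram_shrunk_def gram_diag)

lemma sesq_on_gram_shrunk_lower_bound: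
  "norm2 (\<lambda>x. \<Sum>j<d. c j * \<chi> j x) / 2 \<le> (1 - eps) * Re (sesq_on {..<d} c gram_shrunk c)"
proof -
  define u where "u = (\<lambda>x. \<Sum>j<d. c j * \<chi> j x)"
  have ne: "1 - eps \<noteq> 0" using eps_le_half by simp
  have "sesq_on {..<d} c gram_shrunk c =
     (sesq_on {..<d} c gram c - complex_of_real eps * (\<Sum>i<d. cnj (c i) * c i)) / complex_of_real (1 - eps)"
  proof -
    have "sesq_on {..<d} c gram_shrunk c =
       (\<Sum>i<d. \<Sum>j<d. (cnj (c i) * gram i j * c j - (if i = j then complex_of_real eps * (cnj (c i) * c i) else 0))
          / complex_of_real (1 - eps))"
      unfolding sesq_on_def gram_shrunk_def by (rule sum.cong[OF refl])+ (auto simp: field_simps)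
    also have "\<dots> = (sesq_on {..<d} c gram c - complex_of_real eps * (\<Sum>i<d. cnj (c i) * c i))
       / complex_of_real (1 - eps)"
      unfolding sesq_on_def by (simp add: sum_divide_distrib[symmetric] sum_subtractf sum_distrib_left)
    finally show ?thesis .
  qed
  also have "(\<Sum>i<d. cnj (c i) * c i) = complex_of_real (\<Sum>i<d. (cmod (c i))\<^sup>2)"
    unfolding of_real_sum by (rule sum.cong[OF refl]) (subst complex_norm_square, rule mult.commute)
  finally have e: "sesq_on {..<d} c gram_shrunk c =
      complex_of_real ((norm2 u - eps * (\<Sum>i<d. (cmod (c i))\<^sup>2)) / (1 - eps))"
    unfolding sesq_on_gram u_def by simp
  have "\<And>i. i < d \<Longrightarrow> c i = coord u i" using coord_unique[of u c] unfolding u_def by auto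
  hence "(\<Sum>i<d. (cmod (c i))\<^sup>2) = (\<Sum>i<d. (cmod (coord u i))\<^sup>2)" by simp
  also have "\<dots> \<le> dual_bound * norm2 u" by (rule norm2_coord_le)
  finally have "eps * (\<Sum>i<d. (cmod (c i))\<^sup>2) \<le> eps * (dual_bound * norm2 u)"
    using eps_pos by (intro mult_left_mono) auto
  also have "\<dots> \<le> norm2 u / 2"
  proof -
    have "eps * (dual_bound * norm2 u) = (dual_bound / (2 * (dual_bound + 1))) * norm2 u"
      by (simp add: eps_def)
    also have "\<dots> \<le> (1/2) * norm2 u"
      using dual_bound_nonneg sqnorm_on_nonneg[of _ u] by (intro mult_right_mono) (auto simp: field_simps)
    finally show ?thesis by simp
  qed
  finally have "norm2 u / 2 \<le> norm2 u - eps * (\<Sum>i<d. (cmod (c i))\<^sup>2)" by simp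
  thus ?thesis unfolding e u_def[symmetric] using ne by simp
qed

lemma gram_shrunk_psd: "psd d gram_shrunk"
  unfolding psd_def
proof (intro conjI allI impI)
  fix x y assume "x < d" "y < d"
  show "gram_shrunk y x = cnj (gram_shrunk x y)"
    unfolding gram_shrunk_def gram_def inner_on_def by (simp add: mult.commute)
next
  fix c :: "nat \<Rightarrow> complex"
  have "0 \<le> (1 - eps) * Re (sesq_on {..<d} c gram_shrunk c)"
    using sesq_on_gram_shrunk_lower_bound[of c] sqnorm_on_nonneg[of "{..<d}" "\<lambda>x. \<Sum>j<d. c j * \<chi> j x"]
    by linarith
  thus "0 \<le> Re (\<Sum>x<d. \<Sum>y<d. cnj (c x) * gram_shrunk x y * c y)"
    using eps_le_half by (simp add: zero_le_mult_iff sesq_on_def)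
qed

lemma gram_shrunk_pos_def:
  assumes "sesq_on {..<d} c gram_shrunk c = 0" "i < d"
  shows "c i = 0"
proof -
  define u where "u = (\<lambda>x. \<Sum>j<d. c j * \<chi> j x)"
  have "norm2 u \<le> 0" using sesq_on_gram_shrunk_lower_bound[of c] assms(1) unfolding u_def by simp
  hence "norm2 u = 0" using sqnorm_on_nonneg[of "{..<d}" u] by linarith
  hence "\<forall>x<d. u x = 0" by (simp add: sqnorm_on_eq_0_iff)
  hence "coord u i = 0" unfolding coord_def by simp
  thus ?thesis using coord_unique[of u c i] assms(2) unfolding u_def by auto
qed

definition shrunk_factor :: "nat \<Rightarrow> nat \<Rightarrow> complex" where
  "shrunk_factor = (SOME w. \<forall>x<d. \<forall>y<d. gram_shrunk x y = (\<Sum>k<d. w k x * cnj (w k y)))"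

lemma shrunk_factor: "x < d \<Longrightarrow> y < d \<Longrightarrow> gram_shrunk x y = (\<Sum>k<d. shrunk_factor k x * cnj (shrunk_factor k y))"
  using someI_ex[OF psd_gram_factorization[OF gram_shrunk_psd]] unfolding shrunk_factor_def by blast

definition shrunk_vec :: "nat \<Rightarrow> nat \<Rightarrow> complex" where
  "shrunk_vec i k = cnj (shrunk_factor k i)"

lemma shrunk_vec_gram:
  "i < d \<Longrightarrow> j < d \<Longrightarrow> inner_on {..<d} (shrunk_vec i) (shrunk_vec j) = gram_shrunk i j"
  by (simp add: inner_on_def shrunk_vec_def shrunk_factor)

lemma shrunk_vec_indep:
  assumes "\<forall>k<d. (\<Sum>j<d. c j * shrunk_vec j k) = 0" "i < d"
  shows "c i = 0"
proof (rule gram_shrunk_pos_def[OF _ assms(2)])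
  have "(\<Sum>k\<in>{..<d}. cnj (\<Sum>i<d. c i * shrunk_vec i k) * (\<Sum>j<d. c j * shrunk_vec j k)) =
     (\<Sum>i<d. \<Sum>j<d. cnj (c i) * inner_on {..<d} (shrunk_vec i) (shrunk_vec j) * c j)"
    unfolding inner_on_def by (rule gram_quadratic_form)
  also have "\<dots> = sesq_on {..<d} c gram_shrunk c"
    unfolding sesq_on_def by (intro sum.cong refl) (simp add: shrunk_vec_gram)
  finally show "sesq_on {..<d} c gram_shrunk c = 0" using assms(1) by simp
qed

lemma shrunk_vec_nonzero: "i < d \<Longrightarrow> \<exists>k<d. shrunk_vec i k \<noteq> 0"
proof (rule ccontr)
  assume i: "i < d" and "\<not> (\<exists>k<d. shrunk_vec i k \<noteq> 0)"
  hence "inner_on {..<d} (shrunk_vec i) (shrunk_vec i) = 0" unfolding inner_on_def by simp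
  thus False using shrunk_vec_gram[OF i i] gram_shrunk_diag[OF i] by simp
qed

lemma support_eq_singleton_if_parallel:
  assumes iS: "i \<in> support \<psi>"
    and par: "\<And>p p'. p < d \<Longrightarrow> p' < d \<Longrightarrow>
      (\<Sum>j<d. coord \<psi> j * shrunk_vec j p) * shrunk_vec i p' = shrunk_vec i p * (\<Sum>j<d. coord \<psi> j * shrunk_vec j p')"
  shows "support \<psi> = {i}"
proof -
  have i: "i < d" using iS support_subset by auto
  define w where "w p = (\<Sum>j<d. coord \<psi> j * shrunk_vec j p)" for p
  obtain p' where p': "p' < d" "shrunk_vec i p' \<noteq> 0" using shrunk_vec_nonzero[OF i] by blast
  define lam where "lam = w p' / shrunk_vec i p'"
  define c where "c j = coord \<psi> j - (if j = i then lam else 0)" for j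
  have "\<forall>k<d. (\<Sum>j<d. c j * shrunk_vec j k) = 0"
  proof (intro allI impI)
    fix k assume k: "k < d"
    have "(\<Sum>j<d. c j * shrunk_vec j k) = w k - (\<Sum>j<d. (if j = i then lam else 0) * shrunk_vec j k)"
      unfolding c_def w_def by (simp add: left_diff_distrib sum_subtractf)
    also have "(\<Sum>j<d. (if j = i then lam else 0) * shrunk_vec j k) = lam * shrunk_vec i k"
      by (subst sum.eq_single_point[of _ i]) (use i in auto)
    also have "w k = lam * shrunk_vec i k"
      using par[OF k p'(1)] p'(2) unfolding lam_def w_def by (simp add: field_simps)
    finally show "(\<Sum>j<d. c j * shrunk_vec j k) = 0" by simp
  qed
  hence "c j = 0" if "j < d" for j using shrunk_vec_indep that by blast
  hence "coord \<psi> j = 0" if "j < d" "j \<noteq> i" for j using that by (simp add: c_def)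
  thus ?thesis using iS by (auto simp: support_def)
qed

end

section \<open>The embedding\<close>

locale classical_embedding = classical_basis +
  fixes m :: nat
  assumes two_le_m: "2 \<le> m"
begin

abbreviation M :: "(nat \<Rightarrow> nat) set" where
  "M \<equiv> mp_idx (Suc d) (sys_anc_dims d m)"

lemma finite_M: "finite M"
  unfolding mp_idx_def by (intro finite_PiE) auto

text \<open>Each ancilla carries |0>, except ancilla i + 1 in the i-th basis state, which carries
  t|0> + s|1> with t^2 = 1 - eps and s^2 = eps; this supplies the factor 1 - eps missing
  between gram_shrunk and gram.\<close>

definition t :: real where "t = sqrt (1 - eps)"
definition s :: real where "s = sqrt eps"

lemma t_pos: "0 < t" and s_pos: "0 < s"
  using eps_pos eps_le_half by (auto simp: t_def s_def)

lemma t_sq: "complex_of_real t * complex_of_real t = complex_of_real (1 - eps)"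
  using eps_le_half by (simp del: of_real_mult add: of_real_mult[symmetric] t_def)

lemma t_sq_plus_s_sq: "complex_of_real t * complex_of_real t + complex_of_real s * complex_of_real s = 1"
  using eps_le_half eps_pos by (simp del: of_real_mult add: of_real_mult[symmetric] t_def s_def)

definition anc_state :: "nat \<Rightarrow> complex" where
  "anc_state y = (if y = 0 then complex_of_real t else if y = 1 then complex_of_real s else 0)"

definition local_factor :: "nat \<Rightarrow> nat \<Rightarrow> nat \<Rightarrow> complex" where
  "local_factor i l y =
     (if l = 0 then shrunk_vec i y else if l = Suc i then anc_state y else delta_vec 0 y)"

definition emb_basis :: "nat \<Rightarrow> (nat \<Rightarrow> nat) \<Rightarrow> complex" where
  "emb_basis i f = (\<Prod>l<Suc d. local_factor i l (f l))"

definition Lam :: "(nat \<Rightarrow> nat) \<Rightarrow> nat \<Rightarrow> complex" where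
  "Lam f x = (\<Sum>i<d. dual i x * emb_basis i f)"

abbreviation embed :: "(nat \<Rightarrow> complex) \<Rightarrow> (nat \<Rightarrow> nat) \<Rightarrow> complex" where
  "embed \<equiv> op_apply {..<d} Lam"

lemma embed_eq: "embed \<psi> f = (\<Sum>i<d. coord \<psi> i * emb_basis i f)"
proof -
  have "embed \<psi> f = (\<Sum>x<d. \<Sum>i<d. dual i x * \<psi> x * emb_basis i f)"
    unfolding op_apply_def Lam_def by (simp add: sum_distrib_right sum_distrib_left mult_ac)
  also have "\<dots> = (\<Sum>i<d. coord \<psi> i * emb_basis i f)"
    unfolding coord_def by (subst sum.swap) (simp add: sum_distrib_right)
  finally show ?thesis .
qed

lemma embed_eq_support_sum: "embed \<psi> f = (\<Sum>i\<in>support \<psi>. coord \<psi> i * emb_basis i f)"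
  unfolding embed_eq by (rule sum.mono_neutral_right) (auto simp: support_def)

lemma ancilla_inner:
  assumes "i < d" "j < d"
  shows "(\<Sum>y<sys_anc_dims d m (Suc l). cnj (local_factor i (Suc l) y) * local_factor j (Suc l) y) =
     (if l = i \<and> l = j then 1 else if l = i \<or> l = j then complex_of_real t else 1)"
proof -
  have m0: "0 \<in> {..<m}" "1 \<in> {..<m}" using two_le_m by auto
  consider "l = i" "l = j" | "l = i" "l \<noteq> j" | "l \<noteq> i" "l = j" | "l \<noteq> i" "l \<noteq> j" by blast
  thus ?thesis
  proof cases
    case 1
    have "(\<Sum>y<m. cnj (anc_state y) * anc_state y) = cnj (anc_state 0) * anc_state 0 + cnj (anc_state 1) * anc_state 1"
      by (rule sum.eq_two_points) (use m0 in \<open>auto simp: anc_state_def\<close>)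
    thus ?thesis using 1 t_sq_plus_s_sq by (simp add: sys_anc_dims_def local_factor_def anc_state_def)
  next
    case 2
    have "(\<Sum>y<m. cnj (anc_state y) * delta_vec 0 y) = cnj (anc_state 0)"
      by (subst sum.eq_single_point[of _ 0]) (use m0 in \<open>auto simp: delta_vec_def\<close>)
    thus ?thesis using 2 by (simp add: sys_anc_dims_def local_factor_def anc_state_def)
  next
    case 3
    have "(\<Sum>y<m. cnj (delta_vec 0 y) * anc_state y) = anc_state 0"
      by (subst sum.eq_single_point[of _ 0]) (use m0 in \<open>auto simp: delta_vec_def\<close>)
    thus ?thesis using 3 by (simp add: sys_anc_dims_def local_factor_def anc_state_def)
  next
    case 4
    have "(\<Sum>y<m. cnj (delta_vec 0 y) * delta_vec 0 y) = 1"
      by (subst sum.eq_single_point[of _ 0]) (use m0 in \<open>auto simp: delta_vec_def\<close>)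
    thus ?thesis using 4 by (simp add: sys_anc_dims_def local_factor_def)
  qed
qed

lemma emb_basis_gram:
  assumes i: "i < d" and j: "j < d"
  shows "inner_on M (emb_basis i) (emb_basis j) = gram i j"
proof -
  define g where "g l = (\<Sum>y<sys_anc_dims d m l. cnj (local_factor i l y) * local_factor j l y)" for l
  have "inner_on M (emb_basis i) (emb_basis j) = (\<Sum>f\<in>M. \<Prod>l<Suc d. cnj (local_factor i l (f l)) * local_factor j l (f l))"
    by (simp add: inner_on_def emb_basis_def prod.distrib)
  also have "\<dots> = (\<Prod>l<Suc d. g l)"
    unfolding mp_idx_def g_def by (rule prod_sum_PiE[symmetric]) auto
  also have "\<dots> = g 0 * (\<Prod>l<d. g (Suc l))" by (rule prod.lessThan_Suc_shift)
  also have "g 0 = gram_shrunk i j"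
    using shrunk_vec_gram[OF i j] by (simp add: g_def inner_on_def sys_anc_dims_def local_factor_def)
  also have "(\<Prod>l<d. g (Suc l)) = (\<Prod>l<d. (if l = i \<and> l = j then 1 else if l = i \<or> l = j then complex_of_real t else 1))"
    unfolding g_def by (intro prod.cong refl ancilla_inner i j)
  also have "gram_shrunk i j * \<dots> = gram i j"
  proof (cases "i = j")
    case True
    have "(\<Prod>l<d. (if l = i \<and> l = j then 1 else if l = i \<or> l = j then complex_of_real t else 1)) = 1"
      using True by (intro prod.neutral) auto
    thus ?thesis using True gram_shrunk_diag[OF i] gram_diag[OF i] by simp
  next
    case False
    have "(\<Prod>l<d. (if l = i \<and> l = j then 1 else if l = i \<or> l = j then complex_of_real t else 1))
        = complex_of_real t * complex_of_real t"
      by (subst prod.eq_two_points[of _ i j]) (use False i j in auto)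
    thus ?thesis using False eps_le_half by (simp add: t_sq gram_shrunk_def)
  qed
  finally show ?thesis .
qed

lemma inner_on_embed:
  "inner_on M (embed \<psi>) (embed \<phi>) = inner_on {..<d} \<psi> \<phi>"
proof -
  have "inner_on M (embed \<psi>) (embed \<phi>) =
     (\<Sum>f\<in>M. cnj (\<Sum>i<d. coord \<psi> i * emb_basis i f) * (\<Sum>j<d. coord \<phi> j * emb_basis j f))"
    unfolding inner_on_def embed_eq ..
  also have "\<dots> = (\<Sum>i<d. \<Sum>j<d. cnj (coord \<psi> i) * inner_on M (emb_basis i) (emb_basis j) * coord \<phi> j)"
    unfolding inner_on_def by (rule gram_quadratic_form)
  also have "\<dots> = (\<Sum>i<d. \<Sum>j<d. cnj (coord \<psi> i) * gram i j * coord \<phi> j)"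
    by (intro sum.cong refl) (simp add: emb_basis_gram)
  also have "\<dots> = (\<Sum>x\<in>{..<d}. cnj (\<Sum>i<d. coord \<psi> i * \<chi> i x) * (\<Sum>j<d. coord \<phi> j * \<chi> j x))"
    unfolding gram_def inner_on_def by (rule gram_quadratic_form[symmetric])
  also have "\<dots> = inner_on {..<d} \<psi> \<phi>"
    unfolding inner_on_def by (intro sum.cong refl) (simp add: coord_expansion[symmetric])
  finally show ?thesis .
qed

lemma isometry_Lam: "isometry_on {..<d} M Lam"
  unfolding isometry_on_def
proof (intro ballI)
  fix b c assume b: "b \<in> {..<d}" and c: "c \<in> {..<d}"
  have "(\<Sum>f\<in>M. cnj (Lam f b) * Lam f c) =
      inner_on M (embed (delta_vec b)) (embed (delta_vec c))"
    unfolding inner_on_def op_apply_delta_vec[OF finite_lessThan b] op_apply_delta_vec[OF finite_lessThan c] ..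
  also have "\<dots> = inner_on {..<d} (delta_vec b) (delta_vec c)" by (rule inner_on_embed)
  also have "\<dots> = delta_vec c b" by (rule inner_on_delta_vec[OF finite_lessThan b])
  also have "\<dots> = (if b = c then 1 else 0)" by (auto simp: delta_vec_def)
  finally show "(\<Sum>f\<in>M. cnj (Lam f b) * Lam f c) = (if b = c then 1 else 0)" .
qed

end

context classical_embedding
begin

abbreviation dims :: "nat \<Rightarrow> nat" where
  "dims \<equiv> sys_anc_dims d m"

lemma producible_pure_embed_singleton:
  assumes "support \<psi> = {i}"
  shows "producible_pure (Suc d) dims 1 (embed \<psi>)"
proof -
  have "producible_pure (Suc d) dims (card {0::nat}) (embed \<psi>)"
  proof (rule producible_pure_block_product[where F = "\<lambda>g. coord \<psi> i * local_factor i 0 (g 0)"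
        and h = "local_factor i"])
    show "\<forall>f\<in>M. embed \<psi> f = coord \<psi> i * local_factor i 0 (restrict f {0} 0) *
        (\<Prod>l\<in>{..<Suc d} - {0}. local_factor i l (f l))"
    proof
      fix f
      have "embed \<psi> f = coord \<psi> i * emb_basis i f" by (simp add: embed_eq_support_sum assms)
      also have "emb_basis i f = local_factor i 0 (f 0) * (\<Prod>l\<in>{..<Suc d} - {0}. local_factor i l (f l))"
        unfolding emb_basis_def by (subst prod.remove[of _ 0]) auto
      finally show "embed \<psi> f = coord \<psi> i * local_factor i 0 (restrict f {0} 0) *
          (\<Prod>l\<in>{..<Suc d} - {0}. local_factor i l (f l))"
        by (simp add: mult.assoc)
    qed
  qed auto
  thus ?thesis by simp
qed

text \<open>Grouping the system with the ancillas that carry the support of \<psi> leaves all other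
  ancillas in |0>.\<close>

lemma producible_pure_embed:
  assumes "support \<psi> \<noteq> {}"
  shows "producible_pure (Suc d) dims (card (support \<psi>) + 1) (embed \<psi>)"
proof -
  define S where "S = support \<psi>"
  define B0 where "B0 = insert 0 (Suc ` S)"
  have B0sub: "B0 \<subseteq> {..<Suc d}" using support_subset unfolding B0_def S_def by auto
  have cB0: "card B0 = card S + 1"
    using finite_support unfolding B0_def S_def by (simp add: card_image)
  have "producible_pure (Suc d) dims (card B0) (embed \<psi>)"
  proof (rule producible_pure_block_product[where F = "\<lambda>g. \<Sum>i\<in>S. coord \<psi> i * (\<Prod>l\<in>B0. local_factor i l (g l))"
        and h = "\<lambda>l. delta_vec 0"])
    show "B0 \<subseteq> {..<Suc d}" by (rule B0sub)
    show "B0 \<noteq> {}" unfolding B0_def by simp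
    show "\<forall>f\<in>M. embed \<psi> f = (\<Sum>i\<in>S. coord \<psi> i * (\<Prod>l\<in>B0. local_factor i l (restrict f B0 l))) *
        (\<Prod>l\<in>{..<Suc d} - B0. delta_vec 0 (f l))"
    proof
      fix f
      have "emb_basis i f = (\<Prod>l\<in>B0. local_factor i l (f l)) * (\<Prod>l\<in>{..<Suc d} - B0. delta_vec 0 (f l))"
        if i: "i \<in> S" for i
      proof -
        have "emb_basis i f = (\<Prod>l\<in>{..<Suc d} - B0. local_factor i l (f l)) * (\<Prod>l\<in>B0. local_factor i l (f l))"
          unfolding emb_basis_def by (rule prod.subset_diff[OF B0sub]) simp
        also have "(\<Prod>l\<in>{..<Suc d} - B0. local_factor i l (f l)) = (\<Prod>l\<in>{..<Suc d} - B0. delta_vec 0 (f l))"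
          by (intro prod.cong refl) (use i in \<open>auto simp: local_factor_def B0_def\<close>)
        finally show ?thesis by (simp add: mult.commute)
      qed
      hence "embed \<psi> f = (\<Sum>i\<in>S. coord \<psi> i * ((\<Prod>l\<in>B0. local_factor i l (f l)) *
          (\<Prod>l\<in>{..<Suc d} - B0. delta_vec 0 (f l))))"
        unfolding embed_eq_support_sum S_def by (intro sum.cong refl) simp
      also have "\<dots> = (\<Sum>i\<in>S. coord \<psi> i * (\<Prod>l\<in>B0. local_factor i l (restrict f B0 l))) *
          (\<Prod>l\<in>{..<Suc d} - B0. delta_vec 0 (f l))"
        by (simp add: sum_distrib_right mult.assoc)
      finally show "embed \<psi> f = (\<Sum>i\<in>S. coord \<psi> i * (\<Prod>l\<in>B0. local_factor i l (restrict f B0 l))) *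
          (\<Prod>l\<in>{..<Suc d} - B0. delta_vec 0 (f l))" .
    qed
  qed
  thus ?thesis using cB0 unfolding S_def by simp
qed

definition probe :: "nat \<Rightarrow> nat \<Rightarrow> nat \<Rightarrow> nat \<Rightarrow> nat" where
  "probe i p y = (restrict (\<lambda>_. 0) {..<Suc d})(0 := p, Suc i := y)"

lemma probe_in_M: "i < d \<Longrightarrow> p < d \<Longrightarrow> y < m \<Longrightarrow> probe i p y \<in> M"
  unfolding probe_def using two_le_m
  by (intro mp_idx_fun_upd) (auto simp: mp_idx_def sys_anc_dims_def)

lemma emb_basis_probe0:
  assumes "j < d" shows "emb_basis j (probe i p 0) = shrunk_vec j p * complex_of_real t"
proof -
  have "emb_basis j (probe i p 0) = shrunk_vec j p * (\<Prod>l<d. local_factor j (Suc l) (probe i p 0 (Suc l)))"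
    unfolding emb_basis_def by (subst prod.lessThan_Suc_shift) (simp add: probe_def local_factor_def)
  also have "(\<Prod>l<d. local_factor j (Suc l) (probe i p 0 (Suc l))) = local_factor j (Suc j) 0"
    by (subst prod.eq_single_point[of _ j])
      (use assms in \<open>auto simp: probe_def local_factor_def delta_vec_def\<close>)
  finally show ?thesis by (simp add: local_factor_def anc_state_def)
qed

lemma emb_basis_probe1:
  assumes "j < d" "i < d"
  shows "emb_basis j (probe i p 1) = (if j = i then shrunk_vec i p * complex_of_real s else 0)"
proof -
  have "emb_basis j (probe i p 1) = shrunk_vec j p * (\<Prod>l<d. local_factor j (Suc l) (probe i p 1 (Suc l)))"
    unfolding emb_basis_def by (subst prod.lessThan_Suc_shift) (simp add: probe_def local_factor_def)
  also have "(\<Prod>l<d. local_factor j (Suc l) (probe i p 1 (Suc l))) = (if j = i then complex_of_real s else 0)"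
  proof (cases "j = i")
    case True
    have "(\<Prod>l<d. local_factor j (Suc l) (probe i p 1 (Suc l))) = local_factor j (Suc i) 1"
      by (subst prod.eq_single_point[of _ i])
        (use assms True in \<open>auto simp: probe_def local_factor_def delta_vec_def\<close>)
    thus ?thesis using True by (simp add: local_factor_def anc_state_def)
  next
    case False
    have "local_factor j (Suc i) (probe i p 1 (Suc i)) = 0"
      using False by (simp add: local_factor_def probe_def delta_vec_def)
    hence "(\<Prod>l<d. local_factor j (Suc l) (probe i p 1 (Suc l))) = 0"
      using assms(2) by (intro prod_zero) auto
    thus ?thesis using False by simp
  qed
  finally show ?thesis by simp
qed

lemma embed_probe0: "embed \<psi> (probe i p 0) = complex_of_real t * (\<Sum>j<d. coord \<psi> j * shrunk_vec j p)"
  unfolding embed_eq by (simp add: emb_basis_probe0 sum_distrib_left mult_ac)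

lemma embed_probe1:
  assumes i: "i < d" shows "embed \<psi> (probe i p 1) = complex_of_real s * coord \<psi> i * shrunk_vec i p"
proof -
  have "embed \<psi> (probe i p 1) = (\<Sum>j<d. coord \<psi> j * (if j = i then shrunk_vec i p * complex_of_real s else 0))"
    unfolding embed_eq by (intro sum.cong refl) (simp only: emb_basis_probe1[OF _ i] lessThan_iff)
  also have "\<dots> = coord \<psi> i * (shrunk_vec i p * complex_of_real s)"
    by (subst sum.eq_single_point[of _ i]) (use i in auto)
  finally show ?thesis by (simp only: mult_ac)
qed

text \<open>If the image of \<psi> is a product over blocks, the block of the system contains every ancilla
  i + 1 with i in the support. Otherwise the amplitude is a rank-one function of the entries of the
  system and of ancilla i + 1; evaluated at probe tuples, this makes the combination of shrunk
  vectors parallel to the i-th one.\<close>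

lemma producible_pure_embed_lower_bound:
  assumes two: "2 \<le> card (support \<psi>)"
    and pp: "producible_pure (Suc d) dims j v" and v: "\<forall>f\<in>M. v f = embed \<psi> f"
  shows "card (support \<psi>) + 1 \<le> j"
proof -
  obtain P \<phi> where P: "partition_on {..<Suc d} P" "\<forall>B\<in>P. card B \<le> j"
      "\<forall>f\<in>M. v f = (\<Prod>B\<in>P. \<phi> B (restrict f B))"
    using pp unfolding producible_pure_def by blast
  obtain B0 where B0: "B0 \<in> P" "0 \<in> B0"
    using P(1) unfolding partition_on_def by (metis UnionE lessThan_iff zero_less_Suc)
  have "Suc i \<in> B0" if iS: "i \<in> support \<psi>" for i
  proof (rule ccontr)
    assume notin: "Suc i \<notin> B0"
    have i: "i < d" using iS support_subset by auto
    have cross: "embed \<psi> (probe i p y) * embed \<psi> (probe i p' y') =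
        embed \<psi> (probe i p y') * embed \<psi> (probe i p' y)"
      if "p < d" "p' < d" "y < m" "y' < m" for p p' y y'
      using prod_blocks_cross_ratio[OF partition_on_separates[OF P(1) B0 notin], of \<phi>]
        P(3) v probe_in_M[OF i] that by (simp add: probe_def)
    have ne: "complex_of_real t * complex_of_real s * coord \<psi> i \<noteq> 0"
      using t_pos s_pos iS by (simp add: support_def)
    have "(\<Sum>j<d. coord \<psi> j * shrunk_vec j p) * shrunk_vec i p' = shrunk_vec i p * (\<Sum>j<d. coord \<psi> j * shrunk_vec j p')"
      if "p < d" "p' < d" for p p'
    proof -
      have "embed \<psi> (probe i p 0) * embed \<psi> (probe i p' 1) = embed \<psi> (probe i p 1) * embed \<psi> (probe i p' 0)"
        using cross[OF that, of 0 1] two_le_m by (simp only: mult.commute)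
      hence "(complex_of_real t * complex_of_real s * coord \<psi> i) *
          ((\<Sum>j<d. coord \<psi> j * shrunk_vec j p) * shrunk_vec i p') =
          (complex_of_real t * complex_of_real s * coord \<psi> i) *
          (shrunk_vec i p * (\<Sum>j<d. coord \<psi> j * shrunk_vec j p'))"
        by (simp only: embed_probe0 embed_probe1[OF i] mult_ac)
      thus ?thesis using ne by simp
    qed
    hence "support \<psi> = {i}" by (rule support_eq_singleton_if_parallel[OF iS])
    thus False using two by simp
  qed
  hence "insert 0 (Suc ` support \<psi>) \<subseteq> B0" using B0(2) by auto
  moreover have "finite B0"
    using P(1) B0(1) finite_subset[of B0 "{..<Suc d}"] unfolding partition_on_def by blast
  ultimately have "card (insert 0 (Suc ` support \<psi>)) \<le> card B0" by (rule card_mono[rotated])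
  moreover have "card (insert 0 (Suc ` support \<psi>)) = card (support \<psi>) + 1"
    using finite_support by (simp add: card_image)
  ultimately show ?thesis using P(2) B0(1) by fastforce
qed

end

section \<open>Nonclassical number versus entanglement depth\<close>

context classical_embedding
begin

lemma nonclassical_number_le_producible:
  assumes "producible (Suc d) dims j (conj_op {..<d} Lam \<rho>)"
  shows "NN \<rho> \<le> max 1 (j - 1)"
proof -
  obtain I q \<phi> where D: "pure_decomp M (conj_op {..<d} Lam \<rho>) I q \<phi>"
      and pp: "\<forall>k\<in>I. producible_pure (Suc d) dims j (\<phi> k)"
    using assms unfolding producible_def by blast
  note pullback = conj_op_pure_decomp_pullback[OF isometry_Lam finite_lessThan finite_M D]
  note range = conj_op_pure_decomp_in_range[OF isometry_Lam finite_lessThan finite_M D]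
  have "NR (op_adj_apply M Lam (\<phi> k)) \<le> max 1 (j - 1)" if k: "k \<in> I" for k
  proof (cases "2 \<le> card (support (op_adj_apply M Lam (\<phi> k)))")
    case True
    have "card (support (op_adj_apply M Lam (\<phi> k))) + 1 \<le> j"
      using range[OF k] pp k by (intro producible_pure_embed_lower_bound[OF True]) auto
    thus ?thesis unfolding nonclassical_rank_eq_card_support by simp
  next
    case False thus ?thesis unfolding nonclassical_rank_eq_card_support by simp
  qed
  thus ?thesis by (intro nonclassical_number_le[OF pullback]) blast
qed

lemma producible_conj_op:
  assumes dens: "density_op {..<d} \<rho>"
  shows "producible (Suc d) dims (if NN \<rho> = 1 then 1 else NN \<rho> + 1) (conj_op {..<d} Lam \<rho>)"
proof -
  obtain I p \<psi> where D: "pure_decomp {..<d} \<rho> I p \<psi>" and le: "\<forall>i\<in>I. NR (\<psi> i) \<le> NN \<rho>"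
    using nonclassical_number_attained[OF dens] by blast
  have "producible_pure (Suc d) dims (if NN \<rho> = 1 then 1 else NN \<rho> + 1) (embed (\<psi> i))"
    if i: "i \<in> I" for i
  proof -
    have "unit_vec {..<d} (\<psi> i)" using D i unfolding pure_decomp_def by blast
    hence ne: "support (\<psi> i) \<noteq> {}" by (rule support_nonempty)
    have r: "card (support (\<psi> i)) \<le> NN \<rho>" using le i nonclassical_rank_eq_card_support by metis
    show ?thesis
    proof (cases "card (support (\<psi> i)) = 1")
      case True
      then obtain j where "support (\<psi> i) = {j}" by (rule card_1_singletonE)
      hence "producible_pure (Suc d) dims 1 (embed (\<psi> i))" by (rule producible_pure_embed_singleton)
      thus ?thesis by (rule producible_pure_mono) simp
    next
      case False
      moreover have "card (support (\<psi> i)) \<noteq> 0" using ne finite_support by simp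
      ultimately have "2 \<le> card (support (\<psi> i))" by simp
      hence "NN \<rho> \<noteq> 1" using r by simp
      thus ?thesis using r by (intro producible_pure_mono[OF producible_pure_embed[OF ne]]) simp
    qed
  qed
  thus ?thesis
    using pure_decomp_conj_op[OF isometry_Lam finite_lessThan D] unfolding producible_def by blast
qed

lemma ent_depth_conj_op_nonclassical:
  assumes "density_op {..<d} \<rho>" "2 \<le> NN \<rho>"
  shows "ent_depth (Suc d) dims (conj_op {..<d} Lam \<rho>) = NN \<rho> + 1"
proof (rule ent_depth_eqI)
  show "producible (Suc d) dims (NN \<rho> + 1) (conj_op {..<d} Lam \<rho>)"
    using producible_conj_op[OF assms(1)] assms(2) by simp
next
  fix j assume "producible (Suc d) dims j (conj_op {..<d} Lam \<rho>)"
  thus "NN \<rho> + 1 \<le> j" using nonclassical_number_le_producible assms(2) by fastforce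
qed

lemma ent_depth_conj_op_classical:
  assumes "density_op {..<d} \<rho>" "NN \<rho> = 1"
  shows "ent_depth (Suc d) dims (conj_op {..<d} Lam \<rho>) = 1"
proof (rule ent_depth_eqI)
  show "producible (Suc d) dims 1 (conj_op {..<d} Lam \<rho>)"
    using producible_conj_op[OF assms(1)] assms(2) by simp
next
  fix j assume "producible (Suc d) dims j (conj_op {..<d} Lam \<rho>)"
  thus "1 \<le> j" using not_producible_zero[of "Suc d"] by (cases j) auto
qed

lemma ent_depth_conj_op:
  assumes "density_op {..<d} \<rho>"
  shows "ent_depth (Suc d) dims (conj_op {..<d} Lam \<rho>) = (if NN \<rho> = 1 then 1 else NN \<rho> + 1)"
  using nonclassical_number_pos[OF assms] ent_depth_conj_op_classical[OF assms]
    ent_depth_conj_op_nonclassical[OF assms] by (cases "NN \<rho> = 1") auto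

end

theorem theorem1:
  fixes d m :: nat and \<chi> :: "nat \<Rightarrow> nat \<Rightarrow> complex"
  assumes "2 \<le> m"
    and "\<forall>i<d. unit_vec {..<d} (\<chi> i)"
    and "lin_indep_on {..<d} {..<d} \<chi>"
    and "spans_on {..<d} {..<d} \<chi>"
  shows "\<exists>\<Lambda>. isometry_on {..<d} (mp_idx (d + 1) (sys_anc_dims d m)) \<Lambda> \<and>
     (\<forall>\<rho> k. density_op {..<d} \<rho> \<and> nonclassical_number {..<d} {..<d} \<chi> \<rho> = k \<longrightarrow>
        ((2 \<le> k \<and> k \<le> d \<longrightarrow>
            ent_depth (d + 1) (sys_anc_dims d m) (conj_op {..<d} \<Lambda> \<rho>) = k + 1) \<and>
         (ent_depth (d + 1) (sys_anc_dims d m) (conj_op {..<d} \<Lambda> \<rho>) = 1 \<longleftrightarrow> k = 1)))"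
proof -
  interpret classical_embedding d \<chi> m
    using assms by unfold_locales auto
  have "density_op {..<d} \<rho> \<and> NN \<rho> = k \<longrightarrow>
      (2 \<le> k \<and> k \<le> d \<longrightarrow> ent_depth (Suc d) dims (conj_op {..<d} Lam \<rho>) = k + 1) \<and>
      (ent_depth (Suc d) dims (conj_op {..<d} Lam \<rho>) = 1 \<longleftrightarrow> k = 1)" for \<rho> k
    using ent_depth_conj_op[of \<rho>] nonclassical_number_pos[of \<rho>] by auto
  thus ?thesis using isometry_Lam by auto
qed

end
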